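(* Let $(\Gamma,\gamma)$ be a connected spin network which is not a trivial component, and let $e_0$ be a bridge with $\gamma(e_0)=0$, with endpoints $v_1\ne v_2$. By admissibility the two other half-edges at $v_i$ carry the same decoration $a_i$. Let $\Gamma_1,\Gamma_2$ be the two ribbon graphs (with inherited cyclic orderings and decorations $\gamma_1,\gamma_2$) obtained by deleting $e_0$ and erasing $v_1,v_2$: if the other two half-edges at $v_i$ belong to two distinct edges, these are fused into a single edge decorated $a_i$; if they form a loop at $v_i$, that loop becomes a trivial component decorated $a_i$. Then $$\langle\Gamma,\gamma\rangle^U=\langle\Gamma_1,\gamma_1\rangle^U\,\langle\Gamma_2,\gamma_2\rangle^U\,\delta(v_1)\,\delta(v_2),$$ where $\delta(v_i)=\frac{1}{a_i!\sqrt{a_i+1}}$ if $v_i$ carries a loop and $\delta(v_i)=\frac{1}{\sqrt{a_i+1}}$ otherwise.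
   Context: A cubic ribbon graph $\Gamma=(G,R)$: $G$ a finite graph with all vertices of degree $3$ (multiple edges and loops allowed, a loop counting $2$; a trivial component is a single edge closing on itself with no vertex), $R$ a cyclic ordering of half-edges at each vertex, determining an embedding in a closed orientable surface. A decoration is admissible if at each vertex with incident decorations $a,b,c$ (loop counted twice) $a+b+c$ is even and $|a-b|\le c\le a+b$; a bridge is an edge whose removal disconnects the graph. Penrose evaluation: replace each edge $e$ by $\gamma(e)$ parallel strands on the thickened embedded graph; at each vertex join strands without crossings, $\frac{a+b-c}{2}$ between the $a$- and $b$-edges, $\frac{a+c-b}{2}$ between $a,c$, $\frac{b+c-a}{2}$ between $b,c$; insert $\sigma_e\in\mathfrak S_{\gamma(e)}$ on each edge (for a trivial component with decoration $a$, the $a$ strands form a circle with a permutation inserted); $\langle\Gamma,\gamma\rangle^P=\sum_{\vec\sigma}(\prod_e\mathrm{sign}\,\sigma_e)(-2)^{N(\vec\sigma)}$, $N(\vec\sigma)$ the number of closed curves. Unitary evaluation: $\langle\Gamma,\gamma\rangle^U=\langle\Gamma,\gamma\rangle^P\prod_v[(\frac{a_v+b_v+c_v}{2}+1)!(\frac{a_v+b_v-c_v}{2})!(\frac{a_v+c_v-b_v}{2})!(\frac{b_v+c_v-a_v}{2})!]^{-1/2}$ over vertices $v$ with decorations $a_v,b_v,c_v$ (so for a trivial component $\langle\cdot\rangle^U=\langle\cdot\rangle^P$). *)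

theory Defs
  imports Complex_Main "HOL-Combinatorics.Permutations"
begin

(* A cubic ribbon graph is encoded by its set of half-edges (darts) H,
   the rotation s (cyclic order at vertices; every vertex = s-orbit of length 3)
   and the fixed-point free involution al (the two halves of each edge).
   Trivial components (edges closing on themselves, no vertex) are encoded by a
   separate set C of identifiers, disjoint from H. *)

definition cubic_ribbon :: "'d set \<Rightarrow> ('d \<Rightarrow> 'd) \<Rightarrow> ('d \<Rightarrow> 'd) \<Rightarrow> bool" where
  "cubic_ribbon H s al \<longleftrightarrow> finite H \<and> s permutes H \<and> al permutes H \<and>
     (\<forall>h\<in>H. s h \<noteq> h \<and> s (s (s h)) = h \<and> al h \<noteq> h \<and> al (al h) = h)"

definition admissible :: "'d set \<Rightarrow> ('d \<Rightarrow> 'd) \<Rightarrow> ('d \<Rightarrow> 'd) \<Rightarrow> ('d \<Rightarrow> nat) \<Rightarrow> bool" where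
  "admissible H s al g \<longleftrightarrow>
     (\<forall>h\<in>H. g (al h) = g h) \<and>
     (\<forall>h\<in>H. let a = g h; b = g (s h); c = g (s (s h)) in
        even (a + b + c) \<and> \<bar>int a - int b\<bar> \<le> int c \<and> c \<le> a + b)"

definition verts :: "'d set \<Rightarrow> ('d \<Rightarrow> 'd) \<Rightarrow> 'd set set" where
  "verts H s = (\<lambda>h. {h, s h, s (s h)}) ` H"

definition edges :: "'d set \<Rightarrow> ('d \<Rightarrow> 'd) \<Rightarrow> 'd set \<Rightarrow> 'd set set" where
  "edges H al C = (\<lambda>h. {h, al h}) ` H \<union> (\<lambda>c. {c}) ` C"

definition erep :: "'d set \<Rightarrow> 'd" where
  "erep e = (SOME h. h \<in> e)"

(* strand ends: strand number i (0 \<le> i < g h) on half-edge h, numbered from the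
   right when looking outward from the vertex along h *)
definition strand_ends :: "'d set \<Rightarrow> 'd set \<Rightarrow> ('d \<Rightarrow> nat) \<Rightarrow> ('d \<times> nat) set" where
  "strand_ends H C g = {(h, i). h \<in> H \<union> C \<and> i < g h}"

(* planar (crossing-free) connection of strands at the vertices:
   (g p + g h - g (s h)) / 2 strands join h with its predecessor p = s (s h),
   the remaining ones join h with s h *)
definition vconn :: "'d set \<Rightarrow> ('d \<Rightarrow> 'd) \<Rightarrow> ('d \<Rightarrow> nat) \<Rightarrow> 'd \<times> nat \<Rightarrow> 'd \<times> nat" where
  "vconn H s g x = (case x of (h, i) \<Rightarrow>
     if h \<in> H then
       (let p = s (s h); k = (g p + g h - g (s h)) div 2 in
        if i < k then (p, g p - 1 - i) else (s h, g h - 1 - i))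
     else (h, i))"

(* connection along the edges, with the permutation P e inserted on edge e;
   the identity permutation means parallel strands *)
definition econn :: "'d set \<Rightarrow> ('d \<Rightarrow> 'd) \<Rightarrow> ('d \<Rightarrow> nat)
     \<Rightarrow> ('d set \<Rightarrow> nat \<Rightarrow> nat) \<Rightarrow> 'd \<times> nat \<Rightarrow> 'd \<times> nat" where
  "econn C al g P x = (case x of (h, i) \<Rightarrow>
     if h \<in> C then (h, P {h} i)
     else (let e = {h, al h}; \<pi> = P e in
           if h = erep e then (al h, g h - 1 - \<pi> i)
           else (al h, inv \<pi> (g h - 1 - i))))"

definition perm_assignments :: "'d set \<Rightarrow> ('d \<Rightarrow> 'd) \<Rightarrow> 'd set \<Rightarrow> ('d \<Rightarrow> nat)
     \<Rightarrow> ('d set \<Rightarrow> nat \<Rightarrow> nat) set" where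
  "perm_assignments H al C g =
     Pi\<^sub>E (edges H al C) (\<lambda>e. {\<pi>. \<pi> permutes {..< g (erep e)}})"

definition strand_rel :: "'d set \<Rightarrow> ('d \<Rightarrow> 'd) \<Rightarrow> ('d \<Rightarrow> 'd) \<Rightarrow> 'd set \<Rightarrow> ('d \<Rightarrow> nat)
     \<Rightarrow> ('d set \<Rightarrow> nat \<Rightarrow> nat) \<Rightarrow> (('d \<times> nat) \<times> ('d \<times> nat)) set" where
  "strand_rel H s al C g P =
     {(x, vconn H s g x) | x. x \<in> strand_ends H C g} \<union>
     {(x, econn C al g P x) | x. x \<in> strand_ends H C g}"

definition ncurves :: "'d set \<Rightarrow> ('d \<Rightarrow> 'd) \<Rightarrow> ('d \<Rightarrow> 'd) \<Rightarrow> 'd set \<Rightarrow> ('d \<Rightarrow> nat)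
     \<Rightarrow> ('d set \<Rightarrow> nat \<Rightarrow> nat) \<Rightarrow> nat" where
  "ncurves H s al C g P = card (strand_ends H C g // (strand_rel H s al C g P)\<^sup>*)"

definition penrose :: "'d set \<Rightarrow> ('d \<Rightarrow> 'd) \<Rightarrow> ('d \<Rightarrow> 'd) \<Rightarrow> 'd set \<Rightarrow> ('d \<Rightarrow> nat) \<Rightarrow> real" where
  "penrose H s al C g =
     (\<Sum>P\<in>perm_assignments H al C g.
        (\<Prod>e\<in>edges H al C. real_of_int (sign (P e))) * (-2) ^ ncurves H s al C g P)"

definition vfactor :: "('d \<Rightarrow> 'd) \<Rightarrow> ('d \<Rightarrow> nat) \<Rightarrow> 'd set \<Rightarrow> real" where
  "vfactor s g v = (let h = erep v; a = g h; b = g (s h); c = g (s (s h)) in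
     fact ((a + b + c) div 2 + 1) * fact ((a + b - c) div 2) *
     fact ((a + c - b) div 2) * fact ((b + c - a) div 2))"

definition unitary :: "'d set \<Rightarrow> ('d \<Rightarrow> 'd) \<Rightarrow> ('d \<Rightarrow> 'd) \<Rightarrow> 'd set \<Rightarrow> ('d \<Rightarrow> nat) \<Rightarrow> real" where
  "unitary H s al C g = penrose H s al C g * (\<Prod>v\<in>verts H s. 1 / sqrt (vfactor s g v))"

definition dart_rel :: "'d set \<Rightarrow> ('d \<Rightarrow> 'd) \<Rightarrow> ('d \<Rightarrow> 'd) \<Rightarrow> ('d \<times> 'd) set" where
  "dart_rel H s al = {(x, s x) | x. x \<in> H} \<union> {(x, al x) | x. x \<in> H}"

definition ribbon_connected :: "'d set \<Rightarrow> ('d \<Rightarrow> 'd) \<Rightarrow> ('d \<Rightarrow> 'd) \<Rightarrow> bool" where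
  "ribbon_connected H s al \<longleftrightarrow> (\<forall>x\<in>H. \<forall>y\<in>H. (x, y) \<in> (dart_rel H s al)\<^sup>*)"

definition dart_rel_minus :: "'d set \<Rightarrow> ('d \<Rightarrow> 'd) \<Rightarrow> ('d \<Rightarrow> 'd) \<Rightarrow> 'd \<Rightarrow> ('d \<times> 'd) set" where
  "dart_rel_minus H s al h0 =
     {(x, s x) | x. x \<in> H} \<union> {(x, al x) | x. x \<in> H - {h0, al h0}}"

definition is_bridge :: "'d set \<Rightarrow> ('d \<Rightarrow> 'd) \<Rightarrow> ('d \<Rightarrow> 'd) \<Rightarrow> 'd \<Rightarrow> bool" where
  "is_bridge H s al h0 \<longleftrightarrow> h0 \<in> H \<and>
     \<not> (\<forall>x\<in>H. \<forall>y\<in>H. (x, y) \<in> (dart_rel_minus H s al h0)\<^sup>*)"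

definition side :: "'d set \<Rightarrow> ('d \<Rightarrow> 'd) \<Rightarrow> ('d \<Rightarrow> 'd) \<Rightarrow> 'd \<Rightarrow> 'd \<Rightarrow> 'd set" where
  "side H s al h0 h = {x \<in> H. (h, x) \<in> (dart_rel_minus H s al h0)\<^sup>*}"

definition loop_at :: "('d \<Rightarrow> 'd) \<Rightarrow> ('d \<Rightarrow> 'd) \<Rightarrow> 'd \<Rightarrow> bool" where
  "loop_at s al h \<longleftrightarrow> al (s h) = s (s h)"

(* the piece Gamma_i obtained on the side of the half-edge h, after erasing the
   vertex of h: if loop there, a trivial component (identifier s h, decoration
   g (s h)); otherwise the edges through s h and s (s h) are fused *)
definition piece_darts :: "'d set \<Rightarrow> ('d \<Rightarrow> 'd) \<Rightarrow> ('d \<Rightarrow> 'd) \<Rightarrow> 'd \<Rightarrow> 'd \<Rightarrow> 'd set" where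
  "piece_darts H s al h0 h =
     (if loop_at s al h then {} else side H s al h0 h - {h, s h, s (s h)})"

definition piece_circles :: "('d \<Rightarrow> 'd) \<Rightarrow> ('d \<Rightarrow> 'd) \<Rightarrow> 'd \<Rightarrow> 'd set" where
  "piece_circles s al h = (if loop_at s al h then {s h} else {})"

definition piece_al :: "('d \<Rightarrow> 'd) \<Rightarrow> ('d \<Rightarrow> 'd) \<Rightarrow> 'd \<Rightarrow> 'd \<Rightarrow> 'd" where
  "piece_al s al h x =
     (if x = al (s h) then al (s (s h))
      else if x = al (s (s h)) then al (s h)
      else al x)"

definition delta :: "('d \<Rightarrow> 'd) \<Rightarrow> ('d \<Rightarrow> 'd) \<Rightarrow> ('d \<Rightarrow> nat) \<Rightarrow> 'd \<Rightarrow> real" where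
  "delta s al g h = (let a = g (s h) in
     if loop_at s al h then 1 / (fact a * sqrt (real a + 1)) else 1 / sqrt (real a + 1))"

end

(* The bridge carries no strands, so every closed curve stays on one side of it, and the
   vertex v_i, decorated 0, a_i, a_i, merely joins the a_i strands of its two other edges.
   Composing the two permutations at v_i into one on the fused edge (or on the circle when v_i
   carries a loop) maps the permutation assignments of Gamma onto pairs of assignments of
   Gamma_1 and Gamma_2, preserving the sign product and the number of closed curves. Its
   fibres are parametrised by the permutations forgotten at v_1 and v_2: a_i! of them, or a
   single one at a loop, whose two half-edges form one edge. Hence the Penrose evaluation
   factors up to these multiplicities, and dividing by the square root of the vertex factor
   (a_i + 1)! a_i! of v_i leaves exactly delta(v_i). *)

theory Submission
  imports Defs
begin

section \<open>Quotients by reflexive transitive closures\<close>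

lemma card_image_same_kernel:
  assumes "finite E" "\<And>x y. x\<in>E \<Longrightarrow> y\<in>E \<Longrightarrow> k1 x = k1 y \<longleftrightarrow> k2 x = k2 y"
  shows "card (k1 ` E) = card (k2 ` E)"
proof -
  let ?K = "(\<lambda>x. (k1 x, k2 x)) ` E"
  have i1: "inj_on fst ?K" using assms(2) by (auto simp: inj_on_def)
  have i2: "inj_on snd ?K" using assms(2) by (auto simp: inj_on_def)
  have "k1 ` E = fst ` ?K" "k2 ` E = snd ` ?K" by (auto simp: image_image)
  then show ?thesis using card_image[OF i1] card_image[OF i2] by simp
qed

lemma quotient_eq_image: "A // R = (\<lambda>x. R``{x}) ` A"
  by (auto simp: quotient_def)

lemma rtrancl_Image_eq_iff: "(r\<^sup>*)``{x} = (r\<^sup>*)``{y} \<longleftrightarrow> (x,y) \<in> r\<^sup>* \<and> (y,x) \<in> r\<^sup>*"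
  by (auto intro: rtrancl_trans)

lemma card_quotient_rtrancl_map:
  assumes fin: "finite E" and img: "f ` E = E'"
    and iff: "\<And>x y. x \<in> E \<Longrightarrow> y \<in> E \<Longrightarrow> (x,y) \<in> r\<^sup>* \<longleftrightarrow> (f x, f y) \<in> r'\<^sup>*"
  shows "card (E // r\<^sup>*) = card (E' // r'\<^sup>*)"
proof -
  have "E' // r'\<^sup>* = (\<lambda>x. (r'\<^sup>*)``{f x}) ` E"
    unfolding quotient_eq_image img[symmetric] by (simp add: image_image)
  moreover have "card ((\<lambda>x. (r\<^sup>*)``{x}) ` E) = card ((\<lambda>x. (r'\<^sup>*)``{f x}) ` E)"
    by (rule card_image_same_kernel[OF fin]) (auto simp: rtrancl_Image_eq_iff iff)
  ultimately show ?thesis by (simp add: quotient_eq_image)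
qed

lemma card_quotient_Un_closed:
  assumes fin: "finite E" and E: "E = E1 \<union> E2" and dis: "E1 \<inter> E2 = {}"
   and c1: "\<And>x y. x \<in> E1 \<Longrightarrow> (x,y) \<in> r\<^sup>* \<Longrightarrow> y \<in> E1"
  shows "card (E // r\<^sup>*) = card (E1 // r\<^sup>*) + card (E2 // r\<^sup>*)"
proof -
  have q: "E // r\<^sup>* = E1 // r\<^sup>* \<union> E2 // r\<^sup>*" by (simp add: E quotient_def)
  have d: "E1 // r\<^sup>* \<inter> E2 // r\<^sup>* = {}"
  proof (rule ccontr)
    assume "E1 // r\<^sup>* \<inter> E2 // r\<^sup>* \<noteq> {}"
    then obtain x y where xy: "x \<in> E1" "y \<in> E2" "(r\<^sup>*)``{x} = (r\<^sup>*)``{y}"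
      by (auto simp: quotient_def)
    then have "(x,y) \<in> r\<^sup>*" by (auto simp: rtrancl_Image_eq_iff)
    with c1 xy(1) have "y \<in> E1" by blast
    with xy(2) dis show False by blast
  qed
  have f1: "finite (E1 // r\<^sup>*)" "finite (E2 // r\<^sup>*)"
    using fin E by (auto simp: quotient_eq_image)
  show ?thesis using q d f1 by (simp add: card_Un_disjoint)
qed

(* Strands on a half-edge are numbered from the right looking outward, so the numbering
   is reversed from one end of an edge to the other and between the two sides of a vertex
   corner; outside {..<n} the reversal is the identity, making it a permutation. *)
definition rev_idx :: "nat \<Rightarrow> nat \<Rightarrow> nat" where "rev_idx n i = (if i < n then n - 1 - i else i)"

lemma rev_idx_rev_idx [simp]: "rev_idx n (rev_idx n i) = i"
  by (auto simp: rev_idx_def)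

lemma rev_idx_o_rev_idx: "rev_idx n \<circ> rev_idx n = id"
  by (auto simp: fun_eq_iff)

lemma rev_idx_permutes: "rev_idx n permutes {..<n}"
  using involuntory_imp_bij[of "rev_idx n"] by (simp add: permutes_def bij_iff rev_idx_def)

lemma inv_rev_idx: "inv (rev_idx n) = rev_idx n"
  using inv_unique_comp[OF rev_idx_o_rev_idx rev_idx_o_rev_idx] .

lemma permutes_lessThan_permutation: "(\<pi>::nat\<Rightarrow>nat) permutes {..<n} \<Longrightarrow> permutation \<pi>"
  using permutes_imp_permutation[OF finite_lessThan] by blast

lemma permutation_rev_idx: "permutation (rev_idx n)"
  by (rule permutes_lessThan_permutation[OF rev_idx_permutes])

lemma permutes_orbit_back:
  fixes p :: "nat \<Rightarrow> nat"
  assumes p: "p permutes {..<n}" and st: "\<And>w. w < n \<Longrightarrow> ((c, w), (c, p w)) \<in> R" and z: "z < n"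
  shows "((c, p z), (c, z)) \<in> R\<^sup>*"
proof -
  have pp: "permutation p" using permutes_lessThan_permutation[OF p] .
  obtain m where m: "m > 0" "(p ^^ m) z = z" using permutation_self[OF pp] by blast
  have lt: "(p ^^ k) w < n" if "w < n" for k w
    using permutes_in_funpow_image[OF p, of w k] that by simp
  have pz: "p z < n" using p z permutes_in_image by (metis lessThan_iff)
  have "((c, p z), (c, (p ^^ k) (p z))) \<in> R\<^sup>*" for k
  proof (induction k)
    case 0 then show ?case by simp
  next
    case (Suc k)
    have "((c, (p ^^ k) (p z)), (c, p ((p ^^ k) (p z)))) \<in> R" using st lt[OF pz] by blast
    then show ?case using Suc by (simp add: rtrancl_into_rtrancl)
  qed
  from this[of "m - 1"] have "((c, p z), (c, (p ^^ (m - 1)) (p z))) \<in> R\<^sup>*" .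
  moreover have "(p ^^ (m - 1)) (p z) = (p ^^ m) z"
    using m(1) by (metis Suc_diff_1 funpow_Suc_right o_apply)
  ultimately show ?thesis using m(2) by simp
qed

lemma erep_doubleton: "erep {u, v} \<in> {u, v}"
  unfolding erep_def by (rule someI[of _ u]) simp

(* The index map of econn along the edge {u, al u}, read from the end u: the permutation
   acts at the representative end erep {u, al u}. *)
definition transport :: "('d \<Rightarrow> 'd) \<Rightarrow> 'd \<Rightarrow> nat \<Rightarrow> (nat \<Rightarrow> nat) \<Rightarrow> nat \<Rightarrow> nat" where
  "transport al u n \<pi> = (if u = erep {u, al u} then rev_idx n \<circ> \<pi> else inv \<pi> \<circ> rev_idx n)"

lemma transport_cong: "al u = al' u \<Longrightarrow> transport al u n \<pi> = transport al' u n \<pi>"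
  by (simp add: transport_def)

lemma transport_permutes: "\<pi> permutes {..<n} \<Longrightarrow> transport al u n \<pi> permutes {..<n}"
  unfolding transport_def using permutes_compose[OF _ rev_idx_permutes] permutes_compose[OF rev_idx_permutes permutes_inv] by auto

lemma permutation_transport: "permutation \<pi> \<Longrightarrow> permutation (transport al u n \<pi>)"
  by (simp add: transport_def permutation_compose permutation_inverse permutation_rev_idx)

lemma sign_transport: "permutation \<pi> \<Longrightarrow> sign (transport al u n \<pi>) = sign (rev_idx n) * sign \<pi>"
  by (simp add: transport_def sign_compose sign_inverse permutation_inverse permutation_rev_idx mult.commute)

lemma transport_opposite:
  assumes "al (al u) = u" "u \<noteq> al u" "\<pi> permutes {..<n}"
  shows "transport al (al u) n \<pi> = inv (transport al u n \<pi>)"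
proof -
  have e: "{al u, al (al u)} = {u, al u}" using assms(1) by auto
  have er: "erep {u, al u} \<in> {u, al u}" by (rule erep_doubleton)
  show ?thesis
  proof (cases "u = erep {u, al u}")
    case True
    then have "al u \<noteq> erep {u, al u}" using assms(2) by auto
    moreover have "inv (rev_idx n \<circ> \<pi>) = inv \<pi> \<circ> inv (rev_idx n)"
      using o_inv_distrib[OF permutes_bij[OF rev_idx_permutes] permutes_bij[OF assms(3)]] .
    ultimately show ?thesis using True e by (simp add: transport_def inv_rev_idx)
  next
    case False
    then have "al u = erep {u, al u}" using er by auto
    moreover have "inv (inv \<pi> \<circ> rev_idx n) = inv (rev_idx n) \<circ> inv (inv \<pi>)"
      using o_inv_distrib[OF permutes_bij[OF permutes_inv[OF assms(3)]] permutes_bij[OF rev_idx_permutes]] .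
    ultimately show ?thesis using False e assms(3)
      by (simp add: transport_def inv_rev_idx permutes_inv_inv)
  qed
qed

lemma transport_inj:
  assumes "\<pi> permutes {..<n}" "\<pi>' permutes {..<n}" "transport al u n \<pi> = transport al u n \<pi>'"
  shows "\<pi> = \<pi>'"
proof (cases "u = erep {u, al u}")
  case True
  then have "rev_idx n \<circ> (rev_idx n \<circ> \<pi>) = rev_idx n \<circ> (rev_idx n \<circ> \<pi>')" using assms(3) by (simp add: transport_def)
  then show ?thesis by (simp add: o_assoc rev_idx_o_rev_idx)
next
  case False
  then have "inv \<pi> \<circ> rev_idx n \<circ> rev_idx n = inv \<pi>' \<circ> rev_idx n \<circ> rev_idx n" using assms(3) by (simp add: transport_def)
  then have "inv \<pi> = inv \<pi>'" by (simp add: comp_assoc rev_idx_o_rev_idx)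
  then show ?thesis using assms(1,2) by (metis permutes_inv_inv)
qed

lemma transport_less: "\<pi> permutes {..<n} \<Longrightarrow> i < n \<Longrightarrow> transport al u n \<pi> i < n"
  using transport_permutes permutes_in_image by (metis lessThan_iff)

lemma econn_eq_transport:
  assumes "u \<notin> C" "i < g u" "P {u, al u} permutes {..<g u}"
  shows "econn C al g P (u,i) = (al u, transport al u (g u) (P {u, al u}) i)"
proof -
  have "P {u, al u} i < g u" using assms(2,3) permutes_in_image by (metis lessThan_iff)
  then show ?thesis using assms by (auto simp: econn_def transport_def Let_def rev_idx_def)
qed

lemma econn_involutive:
  assumes "u \<notin> C" "al u \<notin> C" "al (al u) = u" "u \<noteq> al u" "g (al u) = g u"
    "P {u, al u} permutes {..<g u}" "i < g u"
  shows "econn C al g P (u,i) = (al u, transport al u (g u) (P {u, al u}) i)"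
    "transport al u (g u) (P {u, al u}) i < g u"
    "econn C al g P (al u, transport al u (g u) (P {u, al u}) i) = (u, i)"
proof -
  let ?\<pi> = "P {u, al u}"
  show "econn C al g P (u,i) = (al u, transport al u (g u) ?\<pi> i)" using econn_eq_transport[of u C i g P al] assms by simp
  show 2: "transport al u (g u) ?\<pi> i < g u" by (rule transport_less[OF assms(6,7)])
  have e: "{al u, al (al u)} = {u, al u}" using assms(3) by auto
  have "econn C al g P (al u, transport al u (g u) ?\<pi> i) = (al (al u), transport al (al u) (g u) ?\<pi> (transport al u (g u) ?\<pi> i))"
    using econn_eq_transport[of "al u" C "transport al u (g u) ?\<pi> i" g P al] assms 2 e by simp
  also have "\<dots> = (u, i)"
    using transport_opposite[OF assms(3,4,6)] assms(3) permutes_inverses(2)[OF transport_permutes[OF assms(6)]]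
    by simp
  finally show "econn C al g P (al u, transport al u (g u) ?\<pi> i) = (u, i)" .
qed

lemma triangle_half_sums:
  fixes a b c :: nat
  assumes "even(a+b+c)" "a \<le> b+c" "b \<le> a+c" "c \<le> a+b"
  obtains m where "a+b+c = 2*m" "(c+a-b) div 2 = m - b" "(b+c-a) div 2 = m - a" "(a+b-c) div 2 = m - c"
    "a \<le> m" "b \<le> m" "c \<le> m"
proof -
  from assms(1) obtain m where m: "a+b+c = 2*m" by (rule evenE)
  have "c+a-b = 2*(m-b)" "b+c-a = 2*(m-a)" "a+b-c = 2*(m-c)" using m assms by auto
  then show ?thesis using that m assms by auto
qed

lemma vconn_index_pred:
  fixes a b c i :: nat
  assumes "even(a+b+c)" "a \<le> b+c" "b \<le> a+c" "c \<le> a+b" "i < a" "i < (c+a-b) div 2"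
  shows "c-1-i < c \<and> \<not> (c-1-i < (b+c-a) div 2) \<and> c-1-(c-1-i) = i"
proof -
  obtain m where "a+b+c = 2*m" "(c+a-b) div 2 = m - b" "(b+c-a) div 2 = m - a" "(a+b-c) div 2 = m - c"
    "a \<le> m" "b \<le> m" "c \<le> m" using triangle_half_sums[OF assms(1-4)] by blast
  note h = this
  have i1: "i < m - b" using h(2) assms(6) by simp
  have ic: "i < c" using i1 h(1) h(5-7) by linarith
  have "c - 1 - i < c" using ic by linarith
  moreover have "\<not> (c-1-i < m - a)" using i1 h(1) h(5-7) ic by linarith
  moreover have "c-1-(c-1-i) = i" using ic by linarith
  ultimately show ?thesis using h(3) by simp
qed

lemma vconn_index_succ:
  fixes a b c i :: nat
  assumes "even(a+b+c)" "a \<le> b+c" "b \<le> a+c" "c \<le> a+b" "i < a" "\<not> i < (c+a-b) div 2"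
  shows "a-1-i < b \<and> a-1-i < (a+b-c) div 2 \<and> a-1-(a-1-i) = i"
proof -
  obtain m where "a+b+c = 2*m" "(c+a-b) div 2 = m - b" "(b+c-a) div 2 = m - a" "(a+b-c) div 2 = m - c"
    "a \<le> m" "b \<le> m" "c \<le> m" using triangle_half_sums[OF assms(1-4)] by blast
  note h = this
  have i1: "\<not> i < m - b" using h(2) assms(6) by simp
  have "a-1-i < b" using i1 h(1) h(5-7) assms(5) by linarith
  moreover have "a-1-i < m - c" using i1 h(1) h(5-7) assms(5) by linarith
  moreover have "a-1-(a-1-i) = i" using assms(5) by linarith
  ultimately show ?thesis using h(4) by simp
qed

lemma perm_assignment_edge_permutes:
  assumes "Q \<in> perm_assignments D al' C g'" "u \<in> D" "g' (al' u) = g' u"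
  shows "Q {u, al' u} permutes {..<g' u}"
proof -
  have "{u, al' u} \<in> edges D al' C" using assms(2) by (auto simp: edges_def)
  then have "Q {u, al' u} permutes {..<g' (erep {u, al' u})}"
    using assms(1) by (auto simp: perm_assignments_def PiE_iff)
  moreover have "g' (erep {u, al' u}) = g' u" using erep_doubleton[of u "al' u"] assms(3) by auto
  ultimately show ?thesis by simp
qed

lemma card_perm_assignments:
  assumes "finite (edges H al C)"
  shows "card (perm_assignments H al C g) = (\<Prod>e\<in>edges H al C. fact (g (erep e)))"
  unfolding perm_assignments_def card_PiE[OF assms]
  by (rule prod.cong) (auto intro: card_permutations)

lemma prod_remove_two:
  assumes "finite A" "x \<in> A" "y \<in> A" "x \<noteq> y"
  shows "prod f A = f x * (f y * prod f (A - {x, y}))"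
proof -
  have "prod f A = f x * prod f (A - {x})" using prod.remove[OF assms(1,2)] .
  moreover have "prod f (A - {x}) = f y * prod f (A - {x} - {y})"
    using prod.remove[of "A - {x}" y f] assms by auto
  moreover have "A - {x} - {y} = A - {x, y}" by auto
  ultimately show ?thesis by simp
qed

lemma sum_cartesian_product4:
  "(\<Sum>(x, y, _, _)\<in>A \<times> B \<times> C \<times> D. f x * g y) = sum f A * sum g B * of_nat (card C) * of_nat (card D)"
  for f g :: "_ \<Rightarrow> 'a::comm_semiring_1"
proof -
  have "(\<Sum>(x, y, _, _)\<in>A \<times> B \<times> C \<times> D. f x * g y) = (\<Sum>x\<in>A. \<Sum>y\<in>B. f x * g y * of_nat (card (C \<times> D)))"
    by (simp add: sum.cartesian_product[symmetric] ac_simps)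
  also have "\<dots> = sum f A * sum g B * of_nat (card (C \<times> D))"
    unfolding sum_product by (simp add: sum_distrib_right)
  finally show ?thesis by (simp add: card_cartesian_product mult.assoc)
qed

definition penrose_term :: "'d set \<Rightarrow> ('d \<Rightarrow> 'd) \<Rightarrow> ('d \<Rightarrow> 'd) \<Rightarrow> 'd set \<Rightarrow> ('d \<Rightarrow> nat)
     \<Rightarrow> ('d set \<Rightarrow> nat \<Rightarrow> nat) \<Rightarrow> real" where
  "penrose_term H s al C g P =
     (\<Prod>e\<in>edges H al C. real_of_int (sign (P e))) * (-2) ^ ncurves H s al C g P"

lemma penrose_eq_sum: "penrose H s al C g = (\<Sum>P\<in>perm_assignments H al C g. penrose_term H s al C g P)"
  by (simp add: penrose_def penrose_term_def)

definition vweight :: "('d \<Rightarrow> 'd) \<Rightarrow> ('d \<Rightarrow> nat) \<Rightarrow> 'd set \<Rightarrow> real" where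
  "vweight s g v = 1 / sqrt (vfactor s g v)"

lemma unitary_eq_vweight: "unitary H s al C g = penrose H s al C g * (\<Prod>v\<in>verts H s. vweight s g v)"
  by (simp add: unitary_def vweight_def)

locale spin_network =
  fixes H :: "'d set" and s al :: "'d \<Rightarrow> 'd" and g :: "'d \<Rightarrow> nat"
  assumes cub: "cubic_ribbon H s al" and adm: "admissible H s al g"
begin

lemma finite_H: "finite H" using cub by (simp add: cubic_ribbon_def)

lemma s_perm: "s permutes H" using cub by (simp add: cubic_ribbon_def)

lemma al_perm: "al permutes H" using cub by (simp add: cubic_ribbon_def)

lemma s_in_H: "x \<in> H \<Longrightarrow> s x \<in> H" using s_perm by (simp add: permutes_in_image)

lemma al_in_H: "x \<in> H \<Longrightarrow> al x \<in> H" using al_perm by (simp add: permutes_in_image)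

lemma s_ne: "x \<in> H \<Longrightarrow> s x \<noteq> x" using cub by (simp add: cubic_ribbon_def)

lemma s_s_s: "x \<in> H \<Longrightarrow> s (s (s x)) = x" using cub by (simp add: cubic_ribbon_def)

lemma al_ne: "x \<in> H \<Longrightarrow> al x \<noteq> x" using cub by (simp add: cubic_ribbon_def)

lemma al_al: "x \<in> H \<Longrightarrow> al (al x) = x" using cub by (simp add: cubic_ribbon_def)

lemma s_inj: "s x = s y \<Longrightarrow> x = y" using permutes_inj[OF s_perm] by (simp add: inj_eq)

lemma al_inj: "al x = al y \<Longrightarrow> x = y" using permutes_inj[OF al_perm] by (simp add: inj_eq)

lemma ss_ne: "x \<in> H \<Longrightarrow> s (s x) \<noteq> x" using s_s_s s_ne by metis

lemma ss_ne_s: "x \<in> H \<Longrightarrow> s (s x) \<noteq> s x" using s_inj s_ne by metis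

lemma g_al: "x \<in> H \<Longrightarrow> g (al x) = g x" using adm by (simp add: admissible_def)

lemma admissible_at: "x \<in> H \<Longrightarrow> even (g x + g (s x) + g (s (s x))) \<and>
   \<bar>int (g x) - int (g (s x))\<bar> \<le> int (g (s (s x))) \<and> g (s (s x)) \<le> g x + g (s x)"
  using adm by (simp add: admissible_def Let_def)

lemma vconn_involutive:
  assumes u: "u \<in> H" and i: "i < g u"
  shows "fst (vconn H s g (u,i)) \<in> {s u, s (s u)}"
    "snd (vconn H s g (u,i)) < g (fst (vconn H s g (u,i)))"
    "vconn H s g (vconn H s g (u,i)) = (u,i)"
proof -
  define a b c where "a = g u" "b = g (s u)" "c = g (s (s u))"
  have t: "even (a+b+c)" "a \<le> b+c" "b \<le> a+c" "c \<le> a+b"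
    using admissible_at[OF u] unfolding a_b_c_def by auto
  have ssH: "s (s u) \<in> H" "s u \<in> H" using s_in_H u by auto
  have s4: "s (s (s (s u))) = s u" using s_s_s[OF ssH(2)] .
  have s3u: "s (s (s u)) = u" using s_s_s[OF u] .
  have "fst (vconn H s g (u,i)) \<in> {s u, s (s u)} \<and>
    snd (vconn H s g (u,i)) < g (fst (vconn H s g (u,i))) \<and>
    vconn H s g (vconn H s g (u,i)) = (u,i)"
  proof (cases "i < (c + a - b) div 2")
    case True
    note ar = vconn_index_pred[OF t i[folded a_b_c_def(1)] True]
    have v1: "vconn H s g (u,i) = (s (s u), c - 1 - i)"
      using True u by (simp add: vconn_def a_b_c_def Let_def)
    have "vconn H s g (s (s u), c - 1 - i) = (u, c - 1 - (c - 1 - i))"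
      using ar ssH s4 s3u by (simp add: vconn_def a_b_c_def Let_def add.commute)
    then show ?thesis using v1 ar by (simp add: a_b_c_def)
  next
    case False
    note ar = vconn_index_succ[OF t i[folded a_b_c_def(1)] False]
    have v1: "vconn H s g (u,i) = (s u, a - 1 - i)"
      using False u by (simp add: vconn_def a_b_c_def Let_def)
    have "vconn H s g (s u, a - 1 - i) = (u, a - 1 - (a - 1 - i))"
      using ar ssH s3u by (simp add: vconn_def a_b_c_def Let_def add.commute)
    then show ?thesis using v1 ar by (simp add: a_b_c_def)
  qed
  then show "fst (vconn H s g (u,i)) \<in> {s u, s (s u)}"
    "snd (vconn H s g (u,i)) < g (fst (vconn H s g (u,i)))"
    "vconn H s g (vconn H s g (u,i)) = (u,i)" by auto
qed

lemma strand_ends_Sigma: "strand_ends H' C g' = Sigma (H' \<union> C) (\<lambda>h. {..<g' h})"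
  by (auto simp: strand_ends_def)

lemma doubleton_in_edges: "u \<in> H \<Longrightarrow> {u, al u} \<in> edges H al C"
  by (auto simp: edges_def)

lemma assignment_on_edge:
  assumes "P \<in> perm_assignments H al C g" "u \<in> H"
  shows "P {u, al u} permutes {..<g u}"
  using perm_assignment_edge_permutes[OF assms g_al[OF assms(2)]] .

abbreviation ends where "ends \<equiv> strand_ends H {} g"

abbreviation rel where "rel P \<equiv> strand_rel H s al {} g P"

abbreviation "assigns \<equiv> perm_assignments H al {} g"

lemma finite_ends: "finite ends" using finite_H by (simp add: strand_ends_Sigma)

lemma econn_graph:
  assumes "P \<in> perm_assignments H al {} g" "u \<in> H" "i < g u"
  shows "econn {} al g P (u,i) = (al u, transport al u (g u) (P {u, al u}) i)"
    "transport al u (g u) (P {u, al u}) i < g u"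
    "econn {} al g P (al u, transport al u (g u) (P {u, al u}) i) = (u, i)"
proof -
  have "u \<noteq> al u" using al_ne[OF assms(2)] by metis
  then show "econn {} al g P (u,i) = (al u, transport al u (g u) (P {u, al u}) i)"
    "transport al u (g u) (P {u, al u}) i < g u"
    "econn {} al g P (al u, transport al u (g u) (P {u, al u}) i) = (u, i)"
    using econn_involutive[of u "{}" al g P i] assms al_al[OF assms(2)] g_al[OF assms(2)] assignment_on_edge[OF assms(1,2)] by auto
qed

lemma rel_sym:
  assumes P: "P \<in> perm_assignments H al {} g" and xy: "(x,y) \<in> rel P"
  shows "y \<in> ends \<and> (y,x) \<in> rel P"
proof -
  obtain u i where x: "x = (u,i)" "u \<in> H" "i < g u" and
    y: "y = vconn H s g x \<or> y = econn {} al g P x" using xy by (auto simp: strand_rel_def strand_ends_def)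
  from y show ?thesis
  proof
    assume y: "y = vconn H s g x"
    note v = vconn_involutive[OF x(2,3)]
    have "y \<in> ends" using v(1,2) x y s_in_H[OF x(2)] s_in_H[OF s_in_H[OF x(2)]] by (cases y) (auto simp: strand_ends_def)
    moreover have "vconn H s g y = x" using v(3) x y by simp
    moreover have "(y, vconn H s g y) \<in> rel P" using \<open>y \<in> ends\<close> unfolding strand_rel_def by blast
    ultimately show ?thesis by simp
  next
    assume y: "y = econn {} al g P x"
    note e = econn_graph[OF P x(2,3)]
    have "y \<in> ends" using e(1,2) x y al_in_H g_al by (auto simp: strand_ends_def)
    moreover have "econn {} al g P y = x" using e x y by simp
    moreover have "(y, econn {} al g P y) \<in> rel P" using \<open>y \<in> ends\<close> unfolding strand_rel_def by blast
    ultimately show ?thesis by simp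
  qed
qed

lemma rel_rtrancl_sym:
  assumes P: "P \<in> perm_assignments H al {} g" and xy: "(x,y) \<in> (rel P)\<^sup>*" and x: "x \<in> ends"
  shows "y \<in> ends \<and> (y,x) \<in> (rel P)\<^sup>*"
  using xy
proof (induction rule: rtrancl_induct)
  case base then show ?case using x by simp
next
  case (step y z)
  then show ?case using rel_sym[OF P step.hyps(2)] by (meson converse_rtrancl_into_rtrancl)
qed

end

section \<open>The cut at a bridge\<close>

locale bridge = spin_network H s al g for H :: "'d set" and s al g +
  fixes h0 :: 'd
  assumes conn: "ribbon_connected H s al" and br: "is_bridge H s al h0"
    and g0: "g h0 = 0" and nl: "al h0 \<notin> {h0, s h0, s (s h0)}"
begin

lemma h0_in_H: "h0 \<in> H" using br by (simp add: is_bridge_def)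

abbreviation rel_minus where "rel_minus \<equiv> dart_rel_minus H s al h0"

lemma rel_minus_sym: assumes "(x,y) \<in> rel_minus" shows "(y,x) \<in> rel_minus\<^sup>*"
proof -
  have x: "x \<in> H" using assms by (auto simp: dart_rel_minus_def)
  consider "y = s x" | "y = al x" "x \<noteq> h0" "x \<noteq> al h0" using assms by (auto simp: dart_rel_minus_def)
  then show ?thesis
  proof cases
    case 1
    have "(s x, s (s x)) \<in> rel_minus" "(s (s x), s (s (s x))) \<in> rel_minus" using x s_in_H by (auto simp: dart_rel_minus_def)
    then show ?thesis using s_s_s[OF x] 1 by (metis converse_rtrancl_into_rtrancl r_into_rtrancl)
  next
    case 2
    then have "al x \<in> H" "al x \<noteq> h0" "al x \<noteq> al h0" using al_in_H al_al h0_in_H x by metis+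
    then have "(al x, al (al x)) \<in> rel_minus" by (auto simp: dart_rel_minus_def)
    then show ?thesis using al_al[OF x] 2 by auto
  qed
qed

lemma rel_minus_rtrancl_sym: "(x,y) \<in> rel_minus\<^sup>* \<Longrightarrow> (y,x) \<in> rel_minus\<^sup>*"
proof (induction rule: rtrancl_induct)
  case base then show ?case by simp
next
  case (step y z) then show ?case using rel_minus_sym by (meson rtrancl_trans)
qed

lemma rel_minus_in_H: "(x,y) \<in> rel_minus \<Longrightarrow> y \<in> H"
  by (auto simp: dart_rel_minus_def s_in_H al_in_H)

lemma side_closed: assumes "x \<in> side H s al h0 h" "(x,y) \<in> rel_minus\<^sup>*" shows "y \<in> side H s al h0 h"
  using assms(2)
proof (induction rule: rtrancl_induct)
  case base then show ?case using assms(1) .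
next
  case (step y z) then show ?case using rel_minus_in_H by (auto simp: side_def intro: rtrancl_into_rtrancl)
qed

lemma side_self: "h \<in> H \<Longrightarrow> h \<in> side H s al h0 h" by (simp add: side_def)

lemma side_s: "x \<in> side H s al h0 h \<Longrightarrow> s x \<in> side H s al h0 h"
  by (rule side_closed) (auto simp: side_def dart_rel_minus_def)

lemma side_al: "x \<in> side H s al h0 h \<Longrightarrow> x \<noteq> h0 \<Longrightarrow> x \<noteq> al h0 \<Longrightarrow> al x \<in> side H s al h0 h"
  by (rule side_closed) (auto simp: side_def dart_rel_minus_def)

lemma side_subset: "side H s al h0 h \<subseteq> H" by (auto simp: side_def)

lemma H_eq_sides: "H = side H s al h0 h0 \<union> side H s al h0 (al h0)"
proof
  show "side H s al h0 h0 \<union> side H s al h0 (al h0) \<subseteq> H" using side_subset by auto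
next
  show "H \<subseteq> side H s al h0 h0 \<union> side H s al h0 (al h0)"
  proof
    fix x assume x: "x \<in> H"
    have "(h0, x) \<in> (dart_rel H s al)\<^sup>*" using conn x h0_in_H by (simp add: ribbon_connected_def)
    then show "x \<in> side H s al h0 h0 \<union> side H s al h0 (al h0)"
    proof (induction rule: rtrancl_induct)
      case base then show ?case using side_self h0_in_H by auto
    next
      case (step y z)
      show ?case
      proof (cases "(y,z) \<in> rel_minus")
        case True then show ?thesis using step.IH side_closed by blast
      next
        case False
        then have "z = al y" "y = h0 \<or> y = al h0" using step.hyps(2)
          by (auto simp: dart_rel_def dart_rel_minus_def)
        then show ?thesis using side_self h0_in_H al_in_H al_al by auto
      qed
    qed
  qed
qed

lemma sides_disjoint: "side H s al h0 h0 \<inter> side H s al h0 (al h0) = {}"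
proof (rule ccontr)
  assume "side H s al h0 h0 \<inter> side H s al h0 (al h0) \<noteq> {}"
  then obtain x where "(h0, x) \<in> rel_minus\<^sup>*" "(al h0, x) \<in> rel_minus\<^sup>*" by (auto simp: side_def)
  then have ha: "(h0, al h0) \<in> rel_minus\<^sup>*" using rel_minus_rtrancl_sym by (meson rtrancl_trans)
  have all: "(h0, y) \<in> rel_minus\<^sup>*" if "y \<in> H" for y
    using that H_eq_sides ha by (auto simp: side_def intro: rtrancl_trans)
  have "\<forall>x\<in>H. \<forall>y\<in>H. (x, y) \<in> rel_minus\<^sup>*"
    using all rel_minus_rtrancl_sym by (meson rtrancl_trans)
  then show False using br by (simp add: is_bridge_def)
qed

lemma h0_not_at_vertex_al_h0: "h0 \<notin> {al h0, s (al h0), s (s (al h0))}"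
proof -
  have H: "al h0 \<in> H" using al_in_H h0_in_H by auto
  have "h0 \<noteq> al h0" using al_ne h0_in_H by metis
  moreover have "h0 \<noteq> s (al h0)"
  proof
    assume "h0 = s (al h0)"
    then have "s (s h0) = al h0" using s_s_s[OF H] by simp
    then show False using nl by auto
  qed
  moreover have "h0 \<noteq> s (s (al h0))"
  proof
    assume "h0 = s (s (al h0))"
    then have "s h0 = al h0" using s_s_s[OF H] by simp
    then show False using nl by auto
  qed
  ultimately show ?thesis by auto
qed

end

section \<open>One side of the bridge\<close>

(* h is one end of the bridge, x1 and x2 the other two half-edges at its vertex, and S its
   side of the cut; the vertex carries the decorations 0, a, a. *)
locale bridge_end = bridge H s al g h0 for H :: "'d set" and s al g h0 +
  fixes h :: 'd
  assumes h_bridge: "h = h0 \<or> h = al h0"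
begin

abbreviation "x1 \<equiv> s h"

abbreviation "x2 \<equiv> s (s h)"

abbreviation "a \<equiv> g (s h)"

abbreviation "S \<equiv> side H s al h0 h"

abbreviation "looped \<equiv> loop_at s al h"

lemma h_in_H: "h \<in> H" using h_bridge h0_in_H al_in_H by auto

lemma x1_in_H: "x1 \<in> H" using s_in_H h_in_H by auto

lemma x2_in_H: "x2 \<in> H" using s_in_H h_in_H by auto

lemma h_al_h: "{h, al h} = {h0, al h0}" using h_bridge al_al h0_in_H by auto

lemma g_h: "g h = 0" using h_bridge g0 g_al h0_in_H by auto

lemma al_h_not_at_vertex: "al h \<notin> {h, x1, x2}"
  using h_bridge nl h0_not_at_vertex_al_h0 al_al h0_in_H by auto

lemma s_x2: "s x2 = h" using s_s_s h_in_H by auto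

lemma x1_ne_h: "x1 \<noteq> h" using s_ne h_in_H by auto

lemma x2_ne_h: "x2 \<noteq> h" using ss_ne h_in_H by auto

lemma x1_ne_x2: "x1 \<noteq> x2" using ss_ne_s h_in_H by metis

lemma h_in_S: "h \<in> S" using side_self h_in_H by auto

lemma x1_in_S: "x1 \<in> S" using side_s h_in_S by auto

lemma x2_in_S: "x2 \<in> S" using side_s x1_in_S by auto

lemma other_side: "side H s al h0 (al h) \<inter> S = {}"
  using h_bridge sides_disjoint al_al h0_in_H by auto

lemma al_h_notin_S: "al h \<notin> S"
  using other_side side_self al_in_H h_in_H by auto

lemma bridge_dart_in_S: "x \<in> S \<Longrightarrow> x \<in> {h0, al h0} \<Longrightarrow> x = h"
  using h_al_h al_h_notin_S by auto

lemma x1_not_bridge: "x1 \<notin> {h0, al h0}" using x1_ne_h bridge_dart_in_S x1_in_S by blast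

lemma x2_not_bridge: "x2 \<notin> {h0, al h0}" using x2_ne_h bridge_dart_in_S x2_in_S by blast

lemma al_x1_in_S: "al x1 \<in> S" using side_al x1_in_S x1_not_bridge by auto

lemma al_x2_in_S: "al x2 \<in> S" using side_al x2_in_S x2_not_bridge by auto

lemma g_x2: "g x2 = a"
proof -
  have "\<bar>int (g h) - int (g x1)\<bar> \<le> int (g x2)" "g x2 \<le> g h + g x1" using admissible_at[OF h_in_H] by blast+
  then have "int (g x1) \<le> int (g x2)" "g x2 \<le> g x1" using g_h by simp_all
  then show ?thesis by linarith
qed

lemma g_al_x1: "g (al x1) = a" using g_al[OF x1_in_H] .

lemma g_al_x2: "g (al x2) = a" using g_al[OF x2_in_H] g_x2 by simp

lemma looped_iff: "looped \<longleftrightarrow> al x1 = x2" by (simp add: loop_at_def)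

lemma looped_iff': "looped \<longleftrightarrow> al x2 = x1"
  using looped_iff al_al[OF x1_in_H] al_al[OF x2_in_H] by auto

lemma al_x1_ne_h: "al x1 \<noteq> h"
  using al_al[OF x1_in_H] al_h_not_at_vertex by auto

lemma al_x2_ne_h: "al x2 \<noteq> h"
  using al_al[OF x2_in_H] al_h_not_at_vertex by auto

lemma al_x1_ne_x1: "al x1 \<noteq> x1" using al_ne[OF x1_in_H] .

lemma al_x2_ne_x2: "al x2 \<noteq> x2" using al_ne[OF x2_in_H] .

lemma al_x1_ne_al_x2: "al x1 \<noteq> al x2"
  using al_inj x1_ne_x2 by blast

lemma S_subset_H: "S \<subseteq> H" using side_subset by auto

lemma finite_S: "finite S" using S_subset_H finite_H finite_subset by auto

lemma s_off_vertex: assumes "u \<in> S" "u \<notin> {h, x1, x2}" shows "s u \<in> S \<and> s u \<notin> {h, x1, x2}"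
proof -
  have uH: "u \<in> H" using assms S_subset_H by auto
  have "s u \<noteq> h"
  proof
    assume "s u = h" then have "s (s (s u)) = x2" by simp
    then show False using s_s_s[OF uH] assms by simp
  qed
  moreover have "s u \<noteq> x1" using s_inj assms by blast
  moreover have "s u \<noteq> x2" using s_inj assms by blast
  ultimately show ?thesis using side_s[OF assms(1)] by auto
qed

lemma off_vertex_not_bridge: "u \<in> S \<Longrightarrow> u \<notin> {h, x1, x2} \<Longrightarrow> u \<notin> {h0, al h0}"
  using bridge_dart_in_S by (metis insertCI)

lemma al_off_vertex_in_S: "u \<in> S \<Longrightarrow> u \<notin> {h, x1, x2} \<Longrightarrow> al u \<in> S"
  using off_vertex_not_bridge side_al by blast

lemma al_off_vertex: "u \<in> S \<Longrightarrow> u \<notin> {h, x1, x2} \<Longrightarrow> u \<notin> {al x1, al x2} \<Longrightarrow> al u \<notin> {h, x1, x2}"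
proof -
  assume u: "u \<in> S" "u \<notin> {h, x1, x2}" "u \<notin> {al x1, al x2}"
  have uH: "u \<in> H" using u S_subset_H by auto
  show ?thesis
  proof (intro notI)
    assume "al u \<in> {h, x1, x2}"
    then consider "al u = h" | "al u = x1" | "al u = x2" by auto
    then show False
    proof cases
      case 1 then have "u = al h" using al_al uH by metis
      then show False using u al_h_notin_S by auto
    next
      case 2 then have "u = al x1" using al_al uH by metis
      then show False using u by auto
    next
      case 3 then have "u = al x2" using al_al uH by metis
      then show False using u by auto
    qed
  qed
qed

lemma looped_S: assumes "looped" shows "S = {h, x1, x2}"
proof
  show "{h, x1, x2} \<subseteq> S" using h_in_S x1_in_S x2_in_S by auto
next
  have alx: "al x1 = x2" "al x2 = x1" using assms looped_iff looped_iff' by auto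
  have "y \<in> {h, x1, x2}" if "(h, y) \<in> rel_minus\<^sup>*" for y
    using that
  proof (induction rule: rtrancl_induct)
    case base then show ?case by simp
  next
    case (step y z)
    then consider "z = s y" | "z = al y" "y \<noteq> h0" "y \<noteq> al h0" by (auto simp: dart_rel_minus_def)
    then show ?case
    proof cases
      case 1 then show ?thesis using step.IH s_x2 by auto
    next
      case 2
      then have "y \<noteq> h" using h_al_h by auto
      then show ?thesis using step.IH 2 alx by auto
    qed
  qed
  then show "S \<subseteq> {h, x1, x2}" by (auto simp: side_def)
qed

abbreviation "Hp \<equiv> piece_darts H s al h0 h"

abbreviation "alp \<equiv> piece_al s al h"

abbreviation "Cp \<equiv> piece_circles s al h"

abbreviation "e1 \<equiv> {x1, al x1}"

abbreviation "e2 \<equiv> {x2, al x2}"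

abbreviation "e12 \<equiv> {al x1, al x2}"

abbreviation "side_edges \<equiv> {e \<in> edges H al {}. e \<subseteq> S}"

lemma Hp_unlooped: "\<not> looped \<Longrightarrow> Hp = S - {h, x1, x2}" by (simp add: piece_darts_def)

lemma Hp_looped: "looped \<Longrightarrow> Hp = {}" by (simp add: piece_darts_def)

lemma Cp_unlooped: "\<not> looped \<Longrightarrow> Cp = {}" by (simp add: piece_circles_def)

lemma Cp_looped: "looped \<Longrightarrow> Cp = {x1}" by (simp add: piece_circles_def)

lemma alp_al_x1: "alp (al x1) = al x2" by (simp add: piece_al_def)

lemma alp_al_x2: "alp (al x2) = al x1" using al_x1_ne_al_x2 by (simp add: piece_al_def)

lemma alp_other: "u \<noteq> al x1 \<Longrightarrow> u \<noteq> al x2 \<Longrightarrow> alp u = al u" by (simp add: piece_al_def)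

lemma al_x1_in_Hp: "\<not> looped \<Longrightarrow> al x1 \<in> Hp"
  using Hp_unlooped al_x1_in_S al_x1_ne_h al_x1_ne_x1 looped_iff by auto

lemma al_x2_in_Hp: "\<not> looped \<Longrightarrow> al x2 \<in> Hp"
  using Hp_unlooped al_x2_in_S al_x2_ne_h al_x2_ne_x2 looped_iff' by auto

lemma Hp_subset_S: "Hp \<subseteq> S" by (auto simp: piece_darts_def)

lemma Hp_subset_H: "Hp \<subseteq> H" using Hp_subset_S S_subset_H by auto

lemma finite_Hp: "finite Hp" using Hp_subset_H finite_H finite_subset by auto

lemma Hp_closed:
  assumes nl: "\<not> looped" and u: "u \<in> Hp"
  shows "alp u \<in> Hp" "alp (alp u) = u" "alp u \<noteq> u" "g (alp u) = g u" "s u \<in> Hp"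
proof -
  have uS: "u \<in> S" "u \<notin> {h, x1, x2}" using u Hp_unlooped[OF nl] by auto
  have uH: "u \<in> H" using uS S_subset_H by auto
  show "s u \<in> Hp" using s_off_vertex[OF uS] Hp_unlooped[OF nl] by auto
  consider "u = al x1" | "u = al x2" | "u \<noteq> al x1" "u \<noteq> al x2" by blast
  then have "alp u \<in> Hp \<and> alp (alp u) = u \<and> alp u \<noteq> u \<and> g (alp u) = g u"
  proof cases
    case 1 then show ?thesis using alp_al_x1 alp_al_x2 al_x2_in_Hp[OF nl] al_x1_ne_al_x2 g_al_x1 g_al_x2 by auto
  next
    case 2 then show ?thesis using alp_al_x1 alp_al_x2 al_x1_in_Hp[OF nl] al_x1_ne_al_x2 g_al_x1 g_al_x2 by auto
  next
    case 3
    have a1: "alp u = al u" using alp_other[OF 3] .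
    have n: "al u \<notin> {h, x1, x2}" using al_off_vertex[OF uS] 3 by auto
    have "al u \<in> Hp" using al_off_vertex_in_S[OF uS] n Hp_unlooped[OF nl] by auto
    moreover have "al u \<noteq> al x1" "al u \<noteq> al x2" using uS(2) al_inj by blast+
    ultimately show ?thesis using a1 al_al[OF uH] al_ne[OF uH] g_al[OF uH] alp_other by auto
  qed
  then show "alp u \<in> Hp" "alp (alp u) = u" "alp u \<noteq> u" "g (alp u) = g u" by auto
qed

lemma side_edgesE: "e \<in> side_edges \<Longrightarrow> \<exists>u. u \<in> S \<and> al u \<in> S \<and> e = {u, al u}"
  by (auto simp: edges_def)

lemma side_edgesI: "u \<in> S \<Longrightarrow> al u \<in> S \<Longrightarrow> {u, al u} \<in> side_edges"
  using doubleton_in_edges S_subset_H by auto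

lemma e1_in_side_edges: "e1 \<in> side_edges" using side_edgesI x1_in_S al_x1_in_S by auto

lemma e2_in_side_edges: "e2 \<in> side_edges" using side_edgesI x2_in_S al_x2_in_S by auto

lemma e1_ne_e2: "\<not> looped \<Longrightarrow> e1 \<noteq> e2"
  using x1_ne_x2 looped_iff' by (auto simp: doubleton_eq_iff)

lemma e12_notin_edges: assumes "\<not> looped" shows "e12 \<notin> edges H al {}"
proof
  assume "e12 \<in> edges H al {}"
  then obtain u where u: "u \<in> H" "e12 = {u, al u}" by (auto simp: edges_def)
  from u(2) consider "al x1 = u" "al x2 = al u" | "al x1 = al u" "al x2 = u"
    by (auto simp: doubleton_eq_iff)
  then show False
  proof cases
    case 1 then have "x2 = u" using al_inj by blast
    then show False using 1 assms looped_iff by simp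
  next
    case 2 then have "x1 = u" using al_inj by blast
    then show False using 2 assms looped_iff' by simp
  qed
qed

lemma edges_piece_unlooped:
  assumes nl: "\<not> looped"
  shows "edges Hp alp Cp = (side_edges - {e1, e2}) \<union> {e12}"
proof (rule set_eqI)
  fix e
  show "e \<in> edges Hp alp Cp \<longleftrightarrow> e \<in> (side_edges - {e1, e2}) \<union> {e12}"
  proof
    assume "e \<in> edges Hp alp Cp"
    then obtain u where u: "u \<in> Hp" "e = {u, alp u}" using Cp_unlooped[OF nl] by (auto simp: edges_def)
    have uS: "u \<in> S" "u \<notin> {h, x1, x2}" using u Hp_unlooped[OF nl] by auto
    consider "u = al x1" | "u = al x2" | "u \<noteq> al x1" "u \<noteq> al x2" by blast
    then show "e \<in> (side_edges - {e1, e2}) \<union> {e12}"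
    proof cases
      case 1 then show ?thesis using u alp_al_x1 by auto
    next
      case 2 then show ?thesis using u alp_al_x2 by auto
    next
      case 3
      have n: "al u \<notin> {h, x1, x2}" using al_off_vertex[OF uS] 3 by auto
      have "e \<in> side_edges" using u alp_other[OF 3] side_edgesI[OF uS(1) al_off_vertex_in_S[OF uS]] by simp
      moreover have "x1 \<notin> e" "x2 \<notin> e" using u alp_other[OF 3] uS n by auto
      then have "e \<noteq> e1" "e \<noteq> e2" by blast+
      ultimately show ?thesis by simp
    qed
  next
    assume "e \<in> (side_edges - {e1, e2}) \<union> {e12}"
    then consider "e = e12" | "e \<in> side_edges" "e \<noteq> e1" "e \<noteq> e2" by blast
    then show "e \<in> edges Hp alp Cp"
    proof cases
      case 1
      have "{al x1, alp (al x1)} \<in> (\<lambda>h. {h, alp h}) ` Hp" using al_x1_in_Hp[OF nl] by (rule imageI)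
      then show ?thesis using 1 alp_al_x1 unfolding edges_def by simp
    next
      case 2
      obtain u where u: "u \<in> S" "al u \<in> S" "e = {u, al u}" using side_edgesE[OF 2(1)] by blast
      have "u \<noteq> h" using u al_h_notin_S by auto
      moreover have "u \<noteq> x1" "u \<noteq> x2" using u 2 by auto
      moreover have "u \<noteq> al x1" using u 2 al_al[OF x1_in_H] by auto
      moreover have "u \<noteq> al x2" using u 2 al_al[OF x2_in_H] by auto
      ultimately have "u \<in> Hp" "alp u = al u" using u Hp_unlooped[OF nl] alp_other by auto
      then have "{u, alp u} \<in> (\<lambda>h. {h, alp h}) ` Hp" by (intro imageI)
      then show ?thesis using u \<open>alp u = al u\<close> unfolding edges_def by simp
    qed
  qed
qed

lemma side_edges_looped: assumes "looped" shows "side_edges = {e1}"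
proof
  show "{e1} \<subseteq> side_edges" using e1_in_side_edges by auto
next
  show "side_edges \<subseteq> {e1}"
  proof
    fix e assume "e \<in> side_edges"
    then obtain u where u: "u \<in> S" "al u \<in> S" "e = {u, al u}" using side_edgesE by blast
    have "u \<noteq> h" using u al_h_notin_S by auto
    then have "u = x1 \<or> u = x2" using u(1) looped_S[OF assms] by blast
    moreover have "al x1 = x2" using assms looped_iff by blast
    moreover have "al x2 = x1" using assms looped_iff' by blast
    ultimately show "e \<in> {e1}" using u(3) by auto
  qed
qed

lemma edges_piece_looped: "looped \<Longrightarrow> edges Hp alp Cp = {{x1}}"
  using Hp_looped Cp_looped by (simp add: edges_def)

lemma finite_side_edges: "finite side_edges" using finite_H by (simp add: edges_def)

abbreviation "piece_assigns \<equiv> perm_assignments Hp alp Cp g"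

(* Following the strands from al x1 over the erased vertex to al x2; fused_perm is the
   permutation that, placed on the fused edge e12 of the piece, reproduces this map. *)
definition fused_path :: "('d set \<Rightarrow> nat \<Rightarrow> nat) \<Rightarrow> nat \<Rightarrow> nat" where
  "fused_path P = transport al x2 a (P e2) \<circ> rev_idx a \<circ> transport al (al x1) a (P e1)"

definition fused_perm :: "('d set \<Rightarrow> nat \<Rightarrow> nat) \<Rightarrow> nat \<Rightarrow> nat" where
  "fused_perm P = (if al x1 = erep e12 then rev_idx a \<circ> fused_path P else rev_idx a \<circ> inv (fused_path P))"

definition circle_perm :: "('d set \<Rightarrow> nat \<Rightarrow> nat) \<Rightarrow> nat \<Rightarrow> nat" where
  "circle_perm P = rev_idx a \<circ> transport al x1 a (P e1)"

(* Restriction of an assignment to the piece. It loses the permutation on e1, recorded by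
   forgotten; on a loop e1 = e2 becomes the circle and nothing is lost. *)
definition to_piece :: "('d set \<Rightarrow> nat \<Rightarrow> nat) \<Rightarrow> 'd set \<Rightarrow> nat \<Rightarrow> nat" where
  "to_piece P = restrict (\<lambda>e. if looped then circle_perm P else if e = e12 then fused_perm P else P e) (edges Hp alp Cp)"

definition forgotten :: "('d set \<Rightarrow> nat \<Rightarrow> nat) \<Rightarrow> nat \<Rightarrow> nat" where
  "forgotten P = (if looped then id else P e1)"

definition forgotten_perms :: "(nat \<Rightarrow> nat) set" where
  "forgotten_perms = (if looped then {id} else {\<pi>. \<pi> permutes {..<a}})"

lemma al_x1_edge: "{al x1, al (al x1)} = e1" using al_al[OF x1_in_H] by auto

lemma al_x2_edge: "{al x2, al (al x2)} = e2" using al_al[OF x2_in_H] by auto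

lemma assignment_e1_e2:
  assumes "P \<in> assigns"
  shows "P e1 permutes {..<a}" "P e2 permutes {..<a}"
  using assignment_on_edge[OF assms x1_in_H] assignment_on_edge[OF assms x2_in_H] g_x2 by auto

lemma assignment_permutes: assumes "P \<in> assigns" "e \<in> edges H al {}" shows "P e permutes {..<g (erep e)}"
  using assms by (auto simp: perm_assignments_def PiE_iff)

lemma fused_path_permutes: assumes "P \<in> assigns" shows "fused_path P permutes {..<a}"
proof -
  note p = assignment_e1_e2[OF assms]
  have t1: "transport al (al x1) a (P e1) permutes {..<a}" using transport_permutes[OF p(1)] .
  have t2: "transport al x2 a (P e2) \<circ> rev_idx a permutes {..<a}"
    using permutes_compose[OF rev_idx_permutes transport_permutes[OF p(2)]] .
  show ?thesis unfolding fused_path_def using permutes_compose[OF t1 t2] .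
qed

lemma fused_perm_permutes: assumes "P \<in> assigns" shows "fused_perm P permutes {..<a}"
  unfolding fused_perm_def using permutes_compose[OF fused_path_permutes[OF assms] rev_idx_permutes]
    permutes_compose[OF permutes_inv[OF fused_path_permutes[OF assms]] rev_idx_permutes] by simp

lemma circle_perm_permutes: assumes "P \<in> assigns" shows "circle_perm P permutes {..<a}"
  unfolding circle_perm_def using permutes_compose[OF transport_permutes[OF assignment_e1_e2(1)[OF assms]] rev_idx_permutes] .

lemma transport_fused_perm: assumes "P \<in> assigns" shows "transport alp (al x1) a (fused_perm P) = fused_path P"
proof -
  have M: "fused_path P permutes {..<a}" using fused_path_permutes[OF assms] .
  show ?thesis
  proof (cases "al x1 = erep e12")
    case True
    then show ?thesis by (simp add: transport_def fused_perm_def alp_al_x1 o_assoc rev_idx_o_rev_idx)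
  next
    case False
    have "inv (rev_idx a \<circ> inv (fused_path P)) = inv (inv (fused_path P)) \<circ> inv (rev_idx a)"
      using o_inv_distrib[OF permutes_bij[OF rev_idx_permutes] permutes_bij[OF permutes_inv[OF M]]] .
    then have "inv (rev_idx a \<circ> inv (fused_path P)) \<circ> rev_idx a = fused_path P"
      by (simp add: permutes_inv_inv[OF M] inv_rev_idx comp_assoc rev_idx_o_rev_idx)
    then show ?thesis using False by (simp add: transport_def fused_perm_def alp_al_x1)
  qed
qed

lemma sign_fused_path:
  assumes "P \<in> assigns" shows "sign (fused_path P) = sign (rev_idx a) * sign (P e1) * sign (P e2)"
  using permutes_lessThan_permutation[OF assignment_e1_e2(1)[OF assms]]
    permutes_lessThan_permutation[OF assignment_e1_e2(2)[OF assms]]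
  by (simp add: fused_path_def sign_compose permutation_compose permutation_transport
      permutation_rev_idx sign_transport ac_simps)

lemma sign_fused_perm: assumes "P \<in> assigns" shows "sign (fused_perm P) = sign (P e1) * sign (P e2)"
  using permutes_lessThan_permutation[OF fused_path_permutes[OF assms]] sign_fused_path[OF assms]
  by (simp add: fused_perm_def sign_compose sign_inverse permutation_inverse permutation_rev_idx
      mult.assoc[symmetric])

lemma sign_circle_perm: assumes "P \<in> assigns" shows "sign (circle_perm P) = sign (P e1)"
  using permutes_lessThan_permutation[OF assignment_e1_e2(1)[OF assms]]
  by (simp add: circle_perm_def sign_compose permutation_transport permutation_rev_idx sign_transport
      mult.assoc[symmetric])

lemma g_erep_e1: "g (erep e1) = a" using erep_doubleton[of x1 "al x1"] g_al_x1 by auto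

lemma g_erep_e2: "g (erep e2) = a" using erep_doubleton[of x2 "al x2"] g_al_x2 g_x2 by auto

lemma g_erep_e12: "g (erep e12) = a" using erep_doubleton[of "al x1" "al x2"] g_al_x1 g_al_x2 by auto

lemma erep_singleton_x1: "erep {x1} = x1" using erep_doubleton[of x1 x1] by simp

lemma to_piece_in: assumes P: "P \<in> assigns" shows "to_piece P \<in> piece_assigns"
proof (cases looped)
  case True
  then show ?thesis unfolding to_piece_def perm_assignments_def restrict_PiE_iff
    using edges_piece_looped circle_perm_permutes[OF P] erep_singleton_x1 by simp
next
  case False
  have "P e permutes {..<g (erep e)}" if "e \<in> side_edges - {e1, e2}" for e
    using assignment_permutes[OF P] that by blast
  then show ?thesis unfolding to_piece_def perm_assignments_def restrict_PiE_iff
    using False edges_piece_unlooped fused_perm_permutes[OF P] g_erep_e12 by auto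
qed

lemma forgotten_in: assumes P: "P \<in> assigns" shows "forgotten P \<in> forgotten_perms"
  using assignment_e1_e2[OF P] by (simp add: forgotten_def forgotten_perms_def)

lemma e12_notin_side_edges: "\<not> looped \<Longrightarrow> e12 \<notin> side_edges - {e1, e2}" using e12_notin_edges by auto

lemma finite_side_edges_rest: "finite (side_edges - {e1, e2})" using finite_side_edges by auto

lemma to_piece_other: "\<not> looped \<Longrightarrow> e \<in> side_edges - {e1, e2} \<Longrightarrow> to_piece P e = P e"
  unfolding to_piece_def using edges_piece_unlooped e12_notin_side_edges by auto

lemma to_piece_e12: "\<not> looped \<Longrightarrow> to_piece P e12 = fused_perm P"
  unfolding to_piece_def using edges_piece_unlooped by auto

lemma to_piece_looped: "looped \<Longrightarrow> to_piece P {x1} = circle_perm P"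
  unfolding to_piece_def using edges_piece_looped by auto

lemma prod_sign_to_piece:
  assumes P: "P \<in> assigns"
  shows "(\<Prod>e\<in>side_edges. real_of_int (sign (P e))) = (\<Prod>e\<in>edges Hp alp Cp. real_of_int (sign (to_piece P e)))"
proof (cases looped)
  case True
  then show ?thesis using side_edges_looped edges_piece_looped to_piece_looped sign_circle_perm[OF P] by simp
next
  case False
  have "(\<Prod>e\<in>side_edges. real_of_int (sign (P e))) =
     real_of_int (sign (P e1)) * (real_of_int (sign (P e2)) * (\<Prod>e\<in>side_edges - {e1, e2}. real_of_int (sign (P e))))"
    by (subst prod_remove_two[OF finite_side_edges e1_in_side_edges e2_in_side_edges e1_ne_e2[OF False]]) (rule refl)
  also have "\<dots> = real_of_int (sign (to_piece P e12)) * (\<Prod>e\<in>side_edges - {e1, e2}. real_of_int (sign (to_piece P e)))"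
  proof -
    have "(\<Prod>e\<in>side_edges - {e1, e2}. real_of_int (sign (to_piece P e))) = (\<Prod>e\<in>side_edges - {e1, e2}. real_of_int (sign (P e)))"
      by (rule prod.cong) (simp_all only: to_piece_other[OF False])
    moreover have "real_of_int (sign (to_piece P e12)) = real_of_int (sign (P e1)) * real_of_int (sign (P e2))"
      using sign_fused_perm[OF P] to_piece_e12[OF False, of P] by simp
    ultimately show ?thesis by simp
  qed
  also have "\<dots> = (\<Prod>e\<in>insert e12 (side_edges - {e1, e2}). real_of_int (sign (to_piece P e)))"
    by (rule prod.insert[OF finite_side_edges_rest e12_notin_side_edges[OF False], symmetric])
  also have "insert e12 (side_edges - {e1, e2}) = edges Hp alp Cp" using edges_piece_unlooped[OF False] by simp
  finally show ?thesis .
qed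

lemma prod_fact_side_edges:
  "(\<Prod>e\<in>side_edges. fact (g (erep e)) :: nat) = card piece_assigns * card forgotten_perms"
proof (cases looped)
  case True
  have "finite (edges Hp alp Cp)" using edges_piece_looped[OF True] by simp
  then have "card piece_assigns = (\<Prod>e\<in>{{x1}}. fact (g (erep e)))"
    using card_perm_assignments edges_piece_looped[OF True] by metis
  then have "card piece_assigns = fact a" using erep_singleton_x1 by simp
  then show ?thesis using True side_edges_looped[OF True] g_erep_e1 by (simp add: forgotten_perms_def)
next
  case False
  have fe: "finite (edges Hp alp Cp)" using edges_piece_unlooped[OF False] finite_side_edges_rest by simp
  have "(\<Prod>e\<in>side_edges. fact (g (erep e)) :: nat) =
     fact a * (fact a * (\<Prod>e\<in>side_edges - {e1, e2}. fact (g (erep e))))"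
    by (subst prod_remove_two[OF finite_side_edges e1_in_side_edges e2_in_side_edges e1_ne_e2[OF False]]) (simp only: g_erep_e1 g_erep_e2)
  also have "\<dots> = card piece_assigns * fact a"
  proof -
    have e: "edges Hp alp Cp = insert e12 (side_edges - {e1, e2})" using edges_piece_unlooped[OF False] by simp
    have "card piece_assigns = (\<Prod>e\<in>insert e12 (side_edges - {e1, e2}). fact (g (erep e)))"
      using card_perm_assignments[OF fe] unfolding e .
    also have "\<dots> = fact a * (\<Prod>e\<in>side_edges - {e1, e2}. fact (g (erep e)))"
      by (subst prod.insert[OF finite_side_edges_rest e12_notin_side_edges[OF False]]) (simp only: g_erep_e12)
    finally show ?thesis by simp
  qed
  also have "card forgotten_perms = fact a" using False card_permutations[of "{..<a}" a] by (simp add: forgotten_perms_def)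
  ultimately show ?thesis by simp
qed

lemma fused_path_cancel:
  assumes "P \<in> assigns" "Q \<in> assigns" "fused_perm P = fused_perm Q"
  shows "fused_path P = fused_path Q"
proof (cases "al x1 = erep e12")
  case True
  then have "rev_idx a \<circ> (rev_idx a \<circ> fused_path P) = rev_idx a \<circ> (rev_idx a \<circ> fused_path Q)" using assms(3) by (simp add: fused_perm_def)
  then show ?thesis by (simp add: o_assoc rev_idx_o_rev_idx)
next
  case False
  then have "rev_idx a \<circ> (rev_idx a \<circ> inv (fused_path P)) = rev_idx a \<circ> (rev_idx a \<circ> inv (fused_path Q))" using assms(3) by (simp add: fused_perm_def)
  then have "inv (fused_path P) = inv (fused_path Q)" by (simp add: o_assoc rev_idx_o_rev_idx)
  then have "inv (inv (fused_path P)) = inv (inv (fused_path Q))" by simp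
  then show ?thesis using permutes_inv_inv[OF fused_path_permutes[OF assms(1)]] permutes_inv_inv[OF fused_path_permutes[OF assms(2)]] by simp
qed

lemma to_piece_inj:
  assumes P: "P \<in> assigns" and Q: "Q \<in> assigns" and ph: "to_piece P = to_piece Q" and ta: "forgotten P = forgotten Q"
    and e: "e \<in> side_edges"
  shows "P e = Q e"
proof (cases looped)
  case True
  have "circle_perm P = circle_perm Q" using ph to_piece_looped[OF True, of P] to_piece_looped[OF True, of Q] by simp
  then have "rev_idx a \<circ> (rev_idx a \<circ> transport al x1 a (P e1)) = rev_idx a \<circ> (rev_idx a \<circ> transport al x1 a (Q e1))"
    by (simp add: circle_perm_def)
  then have "transport al x1 a (P e1) = transport al x1 a (Q e1)" by (simp add: o_assoc rev_idx_o_rev_idx)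
  then have "P e1 = Q e1" by (rule transport_inj[OF assignment_e1_e2(1)[OF P] assignment_e1_e2(1)[OF Q]])
  then show ?thesis using e side_edges_looped[OF True] by simp
next
  case False
  have e1: "P e1 = Q e1" using ta False by (simp add: forgotten_def)
  have "fused_perm P = fused_perm Q" using ph to_piece_e12[OF False, of P] to_piece_e12[OF False, of Q] by simp
  then have M: "fused_path P = fused_path Q" by (rule fused_path_cancel[OF P Q])
  let ?B = "transport al (al x1) a (P e1)"
  have B: "?B permutes {..<a}" using transport_permutes[OF assignment_e1_e2(1)[OF P]] .
  have "transport al x2 a (P e2) \<circ> rev_idx a \<circ> ?B = transport al x2 a (Q e2) \<circ> rev_idx a \<circ> ?B"
    using M e1 by (simp add: fused_path_def)
  then have "transport al x2 a (P e2) \<circ> rev_idx a \<circ> (?B \<circ> inv ?B) = transport al x2 a (Q e2) \<circ> rev_idx a \<circ> (?B \<circ> inv ?B)"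
    by (simp add: o_assoc)
  then have "transport al x2 a (P e2) \<circ> rev_idx a \<circ> rev_idx a = transport al x2 a (Q e2) \<circ> rev_idx a \<circ> rev_idx a"
    using permutes_inv_o(1)[OF B] by simp
  then have "transport al x2 a (P e2) = transport al x2 a (Q e2)" by (simp add: comp_assoc rev_idx_o_rev_idx)
  then have e2: "P e2 = Q e2" by (rule transport_inj[OF assignment_e1_e2(2)[OF P] assignment_e1_e2(2)[OF Q]])
  show ?thesis
  proof (cases "e \<in> {e1, e2}")
    case True then show ?thesis using e1 e2 by auto
  next
    case False
    then have "e \<in> side_edges - {e1, e2}" using e by blast
    then have "to_piece P e = P e" "to_piece Q e = Q e" using to_piece_other[OF \<open>\<not> looped\<close>] by blast+
    then show ?thesis using ph by simp
  qed
qed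

lemma vconn_x1: "i < a \<Longrightarrow> vconn H s g (x1, i) = (x2, rev_idx a i)"
  using x1_in_H g_x2 g_h s_s_s[OF h_in_H] by (simp add: vconn_def Let_def rev_idx_def)

lemma vconn_x2: "i < a \<Longrightarrow> vconn H s g (x2, i) = (x1, rev_idx a i)"
  using x2_in_H g_x2 g_h s_s_s[OF x1_in_H] s_x2 by (simp add: vconn_def Let_def rev_idx_def)

lemma transport_al_x1_x1:
  assumes P: "P \<in> assigns" and i: "i < a"
  shows "transport al (al x1) a (P e1) (transport al x1 a (P e1) i) = i"
proof -
  have "transport al (al x1) a (P e1) = inv (transport al x1 a (P e1))"
    using transport_opposite[of al x1 "P e1" a] al_al[OF x1_in_H] al_x1_ne_x1 assignment_e1_e2(1)[OF P] by simp
  then show ?thesis using permutes_inverses(2)[OF transport_permutes[OF assignment_e1_e2(1)[OF P]]] by simp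
qed

lemma econn_x1:
  assumes P: "P \<in> assigns" and i: "i < a"
  shows "econn {} al g P (x1, i) = (al x1, transport al x1 a (P e1) i)"
  using econn_graph(1)[OF P x1_in_H] i by simp

lemma econn_x2:
  assumes P: "P \<in> assigns" and i: "i < a"
  shows "econn {} al g P (x2, i) = (al x2, transport al x2 a (P e2) i)"
  using econn_graph(1)[OF P x2_in_H] i g_x2 by simp

lemma econn_ax1:
  assumes P: "P \<in> assigns" and i: "i < a"
  shows "econn {} al g P (al x1, i) = (x1, transport al (al x1) a (P e1) i)"
  using econn_graph(1)[OF P al_in_H[OF x1_in_H]] i g_al_x1 al_al[OF x1_in_H] al_x1_edge by simp

lemma econn_ax2:
  assumes P: "P \<in> assigns" and i: "i < a"
  shows "econn {} al g P (al x2, i) = (x2, transport al (al x2) a (P e2) i)"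
  using econn_graph(1)[OF P al_in_H[OF x2_in_H]] i g_al_x2 al_al[OF x2_in_H] al_x2_edge by simp

abbreviation "side_ends \<equiv> {x \<in> ends. fst x \<in> S}"

abbreviation "piece_ends \<equiv> strand_ends Hp Cp g"

abbreviation "piece_rel Q \<equiv> strand_rel Hp s alp Cp g Q"

(* Moves a strand end at the erased vertex to an end of the same strand on the piece
   (along e1 or e2, or across the vertex onto the circle); it maps curves to curves. *)
definition collapse :: "('d set \<Rightarrow> nat \<Rightarrow> nat) \<Rightarrow> 'd \<times> nat \<Rightarrow> 'd \<times> nat" where
  "collapse P x = (if looped then (if fst x = x2 then (x1, rev_idx a (snd x)) else x)
            else (if fst x = x1 \<or> fst x = x2 then econn {} al g P x else x))"

lemma fused_path_apply: "fused_path P j = transport al x2 a (P e2) (rev_idx a (transport al (al x1) a (P e1) j))"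
  by (simp add: fused_path_def)

lemma edge_off_vertex:
  assumes nl: "\<not> looped" and u: "u \<in> Hp" "u \<noteq> al x1" "u \<noteq> al x2"
  shows "{u, al u} \<in> side_edges - {e1, e2}"
proof -
  have uS: "u \<in> S" "u \<notin> {h, x1, x2}" using u Hp_unlooped[OF nl] by auto
  have n: "al u \<notin> {h, x1, x2}" using al_off_vertex[OF uS] u by auto
  have "{u, al u} \<in> side_edges" using side_edgesI[OF uS(1) al_off_vertex_in_S[OF uS]] .
  moreover have "x1 \<notin> {u, al u}" "x2 \<notin> {u, al u}" using uS n by auto
  ultimately show ?thesis by blast
qed

lemma econn_piece_other:
  assumes P: "P \<in> assigns" and nl: "\<not> looped" and u: "u \<in> Hp" "u \<noteq> al x1" "u \<noteq> al x2" and i: "i < g u"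
  shows "econn Cp alp g (to_piece P) (u, i) = econn {} al g P (u, i)"
proof -
  have uH: "u \<in> H" using u Hp_subset_H by auto
  have a1: "alp u = al u" using alp_other u by auto
  have perm: "to_piece P {u, alp u} permutes {..<g u}"
    using perm_assignment_edge_permutes[OF to_piece_in[OF P] u(1) Hp_closed(4)[OF nl u(1)]] .
  have ph: "to_piece P {u, al u} = P {u, al u}" using to_piece_other[OF nl edge_off_vertex[OF nl u]] .
  have "econn Cp alp g (to_piece P) (u, i) = (alp u, transport alp u (g u) (to_piece P {u, alp u}) i)"
    using econn_eq_transport[of u Cp i g "to_piece P" alp] perm i Cp_unlooped[OF nl] by simp
  also have "\<dots> = (al u, transport al u (g u) (P {u, al u}) i)"
    using a1 ph transport_cong[of alp u al] by simp
  also have "\<dots> = econn {} al g P (u, i)" using econn_graph(1)[OF P uH i] by simp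
  finally show ?thesis .
qed

lemma econn_piece_al_x1:
  assumes P: "P \<in> assigns" and nl: "\<not> looped" and j: "j < a"
  shows "econn Cp alp g (to_piece P) (al x1, j) = (al x2, fused_path P j)"
proof -
  have perm: "to_piece P {al x1, alp (al x1)} permutes {..<g (al x1)}"
    using perm_assignment_edge_permutes[OF to_piece_in[OF P] al_x1_in_Hp[OF nl] Hp_closed(4)[OF nl al_x1_in_Hp[OF nl]]] .
  have "econn Cp alp g (to_piece P) (al x1, j) = (alp (al x1), transport alp (al x1) (g (al x1)) (to_piece P {al x1, alp (al x1)}) j)"
    using econn_eq_transport[of "al x1" Cp j g "to_piece P" alp] perm j Cp_unlooped[OF nl] g_al_x1 by simp
  also have "\<dots> = (al x2, fused_path P j)"
    using alp_al_x1 g_al_x1 to_piece_e12[OF nl, of P] transport_fused_perm[OF P] by simp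
  finally show ?thesis .
qed

lemma econn_piece_al_x2:
  assumes P: "P \<in> assigns" and nl: "\<not> looped" and j: "j < a"
  shows "econn Cp alp g (to_piece P) (al x2, j) = (al x1, inv (fused_path P) j)"
proof -
  have perm: "to_piece P {al x2, alp (al x2)} permutes {..<g (al x2)}"
    using perm_assignment_edge_permutes[OF to_piece_in[OF P] al_x2_in_Hp[OF nl] Hp_closed(4)[OF nl al_x2_in_Hp[OF nl]]] .
  have e: "{al x2, alp (al x2)} = e12" using alp_al_x2 by auto
  have "econn Cp alp g (to_piece P) (al x2, j) = (alp (al x2), transport alp (al x2) (g (al x2)) (to_piece P {al x2, alp (al x2)}) j)"
    using econn_eq_transport[of "al x2" Cp j g "to_piece P" alp] perm j Cp_unlooped[OF nl] g_al_x2 by simp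
  also have "\<dots> = (al x1, transport alp (alp (al x1)) a (fused_perm P) j)"
    using alp_al_x2 alp_al_x1 g_al_x2 e to_piece_e12[OF nl, of P] by simp
  also have "transport alp (alp (al x1)) a (fused_perm P) = inv (transport alp (al x1) a (fused_perm P))"
    using transport_opposite[of alp "al x1" "fused_perm P" a] alp_al_x1 alp_al_x2 al_x1_ne_al_x2 fused_perm_permutes[OF P] by simp
  also have "\<dots> = inv (fused_path P)" using transport_fused_perm[OF P] by simp
  finally show ?thesis .
qed

lemma econn_piece_looped:
  assumes "looped" shows "econn Cp alp g Q (x1, i) = (x1, Q {x1} i)"
  using Cp_looped[OF assms] by (simp add: econn_def)

lemma vconn_piece: "u \<in> Hp \<Longrightarrow> vconn Hp s g (u, i) = vconn H s g (u, i)"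
  using Hp_subset_H by (auto simp: vconn_def)

lemma vconn_piece_looped: "looped \<Longrightarrow> vconn Hp s g x = x"
  using Hp_looped by (auto simp: vconn_def split: prod.splits)

lemma ends_iff: "x \<in> ends \<longleftrightarrow> fst x \<in> H \<and> snd x < g (fst x)"
  by (cases x) (simp add: strand_ends_def)

lemma piece_ends_iff: "x \<in> piece_ends \<longleftrightarrow> fst x \<in> Hp \<union> Cp \<and> snd x < g (fst x)"
  by (cases x) (simp add: strand_ends_def)

lemma rel_vconn: "x \<in> ends \<Longrightarrow> (x, vconn H s g x) \<in> rel P" unfolding strand_rel_def by blast

lemma rel_econn: "x \<in> ends \<Longrightarrow> (x, econn {} al g P x) \<in> rel P" unfolding strand_rel_def by blast

lemma piece_rel_vconn: "x \<in> piece_ends \<Longrightarrow> (x, vconn Hp s g x) \<in> piece_rel Q" unfolding strand_rel_def by blast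

lemma piece_rel_econn: "x \<in> piece_ends \<Longrightarrow> (x, econn Cp alp g Q x) \<in> piece_rel Q" unfolding strand_rel_def by blast

lemma transport_x1_al_x1:
  assumes P: "P \<in> assigns" and i: "i < a"
  shows "transport al x1 a (P e1) (transport al (al x1) a (P e1) i) = i"
proof -
  have "transport al (al x1) a (P e1) = inv (transport al x1 a (P e1))"
    using transport_opposite[of al x1 "P e1" a] al_al[OF x1_in_H] al_x1_ne_x1 assignment_e1_e2(1)[OF P] by simp
  then show ?thesis using permutes_inverses(1)[OF transport_permutes[OF assignment_e1_e2(1)[OF P]]] by simp
qed

lemma transport_x2_al_x2:
  assumes P: "P \<in> assigns" and i: "i < a"
  shows "transport al x2 a (P e2) (transport al (al x2) a (P e2) i) = i"
proof -
  have "transport al (al x2) a (P e2) = inv (transport al x2 a (P e2))"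
    using transport_opposite[of al x2 "P e2" a] al_al[OF x2_in_H] al_x2_ne_x2 assignment_e1_e2(2)[OF P] by simp
  then show ?thesis using permutes_inverses(1)[OF transport_permutes[OF assignment_e1_e2(2)[OF P]]] by simp
qed

lemma transport_e1_less: "P \<in> assigns \<Longrightarrow> i < a \<Longrightarrow> transport al' u a (P e1) i < a"
  by (rule transport_less[OF assignment_e1_e2(1)])

lemma transport_e2_less: "P \<in> assigns \<Longrightarrow> i < a \<Longrightarrow> transport al' u a (P e2) i < a"
  by (rule transport_less[OF assignment_e1_e2(2)])

lemma rev_idx_less: "i < a \<Longrightarrow> rev_idx a i < a" by (simp add: rev_idx_def)

lemma rel_path_al_x1:
  assumes P: "P \<in> assigns" and j: "j < a"
  shows "((al x1, j), (al x2, fused_path P j)) \<in> (rel P)\<^sup>*"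
proof -
  let ?k = "transport al (al x1) a (P e1) j"
  have k: "?k < a" using transport_e1_less[OF P j] .
  have s1: "((al x1, j), (x1, ?k)) \<in> rel P"
    using rel_econn[of "(al x1, j)" P] econn_ax1[OF P j] al_in_H[OF x1_in_H] g_al_x1 j by (simp add: ends_iff)
  have s2: "((x1, ?k), (x2, rev_idx a ?k)) \<in> rel P"
    using rel_vconn[of "(x1, ?k)" P] vconn_x1[OF k] x1_in_H k by (simp add: ends_iff)
  have s3: "((x2, rev_idx a ?k), (al x2, fused_path P j)) \<in> rel P"
    using rel_econn[of "(x2, rev_idx a ?k)" P] econn_x2[OF P rev_idx_less[OF k]] x2_in_H g_x2 rev_idx_less[OF k]
    by (simp add: ends_iff fused_path_apply)
  show ?thesis using s1 s2 s3 by (meson converse_rtrancl_into_rtrancl r_into_rtrancl)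
qed

lemma rel_path_al_x2:
  assumes P: "P \<in> assigns" and i: "i < a"
  shows "((al x2, i), (al x1, inv (fused_path P) i)) \<in> (rel P)\<^sup>*"
proof -
  let ?w = "inv (fused_path P) i"
  have w: "?w < a" using permutes_in_image[OF permutes_inv[OF fused_path_permutes[OF P]], of i] i by simp
  have "fused_path P ?w = i" using permutes_inverses(1)[OF fused_path_permutes[OF P]] by simp
  then have "((al x1, ?w), (al x2, i)) \<in> (rel P)\<^sup>*" using rel_path_al_x1[OF P w] by simp
  moreover have "(al x1, ?w) \<in> ends" using al_in_H[OF x1_in_H] g_al_x1 w by (simp add: ends_iff)
  ultimately show ?thesis using rel_rtrancl_sym[OF P] by blast
qed

lemma rel_path_circle:
  assumes P: "P \<in> assigns" and l: "looped" and i: "i < a"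
  shows "((x1, i), (x1, circle_perm P i)) \<in> (rel P)\<^sup>*"
proof -
  let ?t = "transport al x1 a (P e1) i"
  have t: "?t < a" using transport_e1_less[OF P i] .
  have "((x1, i), (x2, ?t)) \<in> rel P"
    using rel_econn[of "(x1, i)" P] econn_x1[OF P i] x1_in_H i l looped_iff by (simp add: ends_iff)
  moreover have "((x2, ?t), (x1, rev_idx a ?t)) \<in> rel P"
    using rel_vconn[of "(x2, ?t)" P] vconn_x2[OF t] x2_in_H g_x2 t by (simp add: ends_iff)
  ultimately show ?thesis by (simp add: circle_perm_def)
qed

lemma piece_rel_in_rel:
  assumes P: "P \<in> assigns" and xy: "(x,y) \<in> piece_rel (to_piece P)"
  shows "(x,y) \<in> (rel P)\<^sup>*"
proof -
  have x: "x \<in> piece_ends" and y: "y = vconn Hp s g x \<or> y = econn Cp alp g (to_piece P) x"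
    using xy by (auto simp: strand_rel_def)
  obtain u i where ui: "x = (u,i)" by (cases x)
  have "u \<in> Hp \<union> Cp" "i < g u" using x ui piece_ends_iff by auto
  show ?thesis
  proof (cases looped)
    case True
    then have u: "u = x1" "i < a" using \<open>u \<in> Hp \<union> Cp\<close> \<open>i < g u\<close> Hp_looped Cp_looped by auto
    then show ?thesis using y ui vconn_piece_looped[OF True] econn_piece_looped[OF True]
        to_piece_looped[OF True] rel_path_circle[OF P True] by auto
  next
    case False
    then have u: "u \<in> Hp" "i < g u" using \<open>u \<in> Hp \<union> Cp\<close> \<open>i < g u\<close> Cp_unlooped by auto
    have xE: "x \<in> ends" using ui u Hp_subset_H by (auto simp: ends_iff)
    from y show ?thesis
    proof
      assume "y = vconn Hp s g x"
      then show ?thesis using vconn_piece[OF u(1)] rel_vconn[OF xE] ui by auto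
    next
      assume ye: "y = econn Cp alp g (to_piece P) x"
      consider "u = al x1" | "u = al x2" | "u \<noteq> al x1" "u \<noteq> al x2" by blast
      then show ?thesis
      proof cases
        case 1
        then show ?thesis using ye ui u g_al_x1 econn_piece_al_x1[OF P False] rel_path_al_x1[OF P] by simp
      next
        case 2
        then show ?thesis using ye ui u g_al_x2 econn_piece_al_x2[OF P False] rel_path_al_x2[OF P] by simp
      next
        case 3
        then show ?thesis using ye ui econn_piece_other[OF P False u(1) 3 u(2)] rel_econn[OF xE] by auto
      qed
    qed
  qed
qed

lemma side_endsE:
  assumes x: "x \<in> side_ends"
  obtains u i where "x = (u,i)" "u \<in> S" "u \<in> H" "i < g u" "u \<noteq> h"
proof -
  obtain u i where ui: "x = (u,i)" by (cases x)
  have "u \<in> S" "u \<in> H" "i < g u" using x ui by (auto simp: strand_ends_def)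
  moreover have "u \<noteq> h" using \<open>i < g u\<close> g_h by auto
  ultimately show ?thesis using that ui by blast
qed

lemma collapse_connected:
  assumes P: "P \<in> assigns" and x: "x \<in> side_ends"
  shows "(x, collapse P x) \<in> (rel P)\<^sup>* \<and> (collapse P x, x) \<in> (rel P)\<^sup>*"
proof -
  obtain u i where ui: "x = (u,i)" "u \<in> S" "u \<in> H" "i < g u" "u \<noteq> h" using side_endsE[OF x] by blast
  have xE: "x \<in> ends" using x by simp
  show ?thesis
  proof (cases looped)
    case True
    show ?thesis
    proof (cases "u = x2")
      case True2: True
      have "collapse P x = vconn H s g x" using True True2 ui vconn_x2[of i] g_x2 by (simp add: collapse_def)
      then show ?thesis using rel_vconn[OF xE] rel_sym[OF P rel_vconn[OF xE]] by auto
    next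
      case False
      then show ?thesis using True ui by (simp add: collapse_def)
    qed
  next
    case False
    show ?thesis
    proof (cases "u = x1 \<or> u = x2")
      case True
      then have "collapse P x = econn {} al g P x" using False ui by (simp add: collapse_def)
      then show ?thesis using rel_econn[OF xE] rel_sym[OF P rel_econn[OF xE]] by auto
    next
      case F2: False
      then show ?thesis using False ui by (simp add: collapse_def)
    qed
  qed
qed

lemma collapse_in_piece_ends:
  assumes P: "P \<in> assigns" and x: "x \<in> side_ends"
  shows "collapse P x \<in> piece_ends"
proof -
  obtain u i where ui: "x = (u,i)" "u \<in> S" "u \<in> H" "i < g u" "u \<noteq> h" using side_endsE[OF x] by blast
  show ?thesis
  proof (cases looped)
    case True
    then have u: "u = x1 \<or> u = x2" using ui looped_S by auto
    have i: "i < a" using u ui g_x2 by auto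
    from u show ?thesis
    proof
      assume u1: "u = x1"
      then have "collapse P x = (x1, i)" using True ui x1_ne_x2 by (simp add: collapse_def)
      then show ?thesis using Cp_looped[OF True] i by (simp add: strand_ends_def)
    next
      assume u2: "u = x2"
      then have "collapse P x = (x1, rev_idx a i)" using True ui by (simp add: collapse_def)
      then show ?thesis using Cp_looped[OF True] rev_idx_less[OF i] by (simp add: strand_ends_def)
    qed
  next
    case False
    show ?thesis
    proof (cases "u = x1 \<or> u = x2")
      case True
      then have i: "i < a" using ui g_x2 by auto
      from True show ?thesis
      proof
        assume u: "u = x1"
        have "collapse P x = (al x1, transport al x1 a (P e1) i)" using False u ui econn_x1[OF P i] by (simp add: collapse_def)
        then show ?thesis using al_x1_in_Hp[OF False] g_al_x1 transport_e1_less[OF P i] by (simp add: strand_ends_def)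
      next
        assume u: "u = x2"
        have "collapse P x = (al x2, transport al x2 a (P e2) i)" using False u ui econn_x2[OF P i] x1_ne_x2 by (simp add: collapse_def)
        then show ?thesis using al_x2_in_Hp[OF False] g_al_x2 transport_e2_less[OF P i] by (simp add: strand_ends_def)
      qed
    next
      case F2: False
      then have "u \<in> Hp" using ui Hp_unlooped[OF False] by auto
      then show ?thesis using False F2 ui by (simp add: collapse_def strand_ends_def)
    qed
  qed
qed

lemma piece_ends_fixed: "x \<in> piece_ends \<Longrightarrow> x \<in> side_ends \<and> collapse P x = x"
proof -
  assume x: "x \<in> piece_ends"
  obtain u i where ui: "x = (u,i)" by (cases x)
  have u: "u \<in> Hp \<union> Cp" "i < g u" using x ui by (auto simp: strand_ends_def)
  show "x \<in> side_ends \<and> collapse P x = x"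
  proof (cases looped)
    case True
    then have "u = x1" using u Hp_looped Cp_looped by auto
    then have "collapse P x = x" using True ui x1_ne_x2 by (simp add: collapse_def)
    moreover have "x \<in> side_ends" using \<open>u = x1\<close> ui u(2) x1_in_S x1_in_H by (simp add: strand_ends_def)
    ultimately show ?thesis by simp
  next
    case False
    then have "u \<in> Hp" using u Cp_unlooped by auto
    then have "u \<in> S" "u \<noteq> x1" "u \<noteq> x2" using Hp_unlooped[OF False] by auto
    then have "collapse P x = x" using False ui by (simp add: collapse_def)
    moreover have "x \<in> side_ends" using \<open>u \<in> S\<close> ui u(2) S_subset_H by (auto simp: strand_ends_def)
    ultimately show ?thesis by simp
  qed
qed

lemma collapse_image:
  assumes P: "P \<in> assigns" shows "collapse P ` side_ends = piece_ends"
proof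
  show "collapse P ` side_ends \<subseteq> piece_ends" using collapse_in_piece_ends[OF P] by blast
next
  show "piece_ends \<subseteq> collapse P ` side_ends"
  proof
    fix x assume "x \<in> piece_ends"
    then have "x \<in> side_ends" "collapse P x = x" using piece_ends_fixed by blast+
    then show "x \<in> collapse P ` side_ends" by force
  qed
qed

lemma collapse_unlooped_id: "\<not> looped \<Longrightarrow> fst y \<noteq> x1 \<Longrightarrow> fst y \<noteq> x2 \<Longrightarrow> collapse P y = y"
  by (simp add: collapse_def)

lemma collapse_unlooped_vertex: "\<not> looped \<Longrightarrow> fst y = x1 \<or> fst y = x2 \<Longrightarrow> collapse P y = econn {} al g P y"
  by (simp add: collapse_def)

lemma collapse_looped_id: "looped \<Longrightarrow> fst y \<noteq> x2 \<Longrightarrow> collapse P y = y"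
  by (simp add: collapse_def)

lemma collapse_looped_x2: "looped \<Longrightarrow> collapse P (x2, i) = (x1, rev_idx a i)"
  by (simp add: collapse_def)

lemma Hp_off_vertex: "\<not> looped \<Longrightarrow> u \<in> Hp \<Longrightarrow> u \<noteq> x1 \<and> u \<noteq> x2"
  using Hp_unlooped by auto

lemma collapse_step_Hp:
  assumes P: "P \<in> assigns" and nl: "\<not> looped" and u: "u \<in> Hp" and i: "i < g u"
    and y: "y = vconn H s g (u,i) \<or> y = econn {} al g P (u,i)"
  shows "(collapse P (u,i), collapse P y) \<in> (piece_rel (to_piece P))\<^sup>*"
proof -
  have uH: "u \<in> H" using u Hp_subset_H by auto
  have xEp: "(u,i) \<in> piece_ends" using u i by (simp add: strand_ends_def)
  have ffx: "collapse P (u,i) = (u,i)" using collapse_unlooped_id[OF nl] Hp_off_vertex[OF nl u] by simp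
  from y show ?thesis
  proof
    assume y: "y = vconn H s g (u,i)"
    have "fst y \<in> {s u, s (s u)}" using vconn_involutive(1)[OF uH i] y by simp
    moreover have "s u \<in> Hp" "s (s u) \<in> Hp" using Hp_closed(5)[OF nl] u by blast+
    ultimately have "fst y \<in> Hp" by auto
    then have "collapse P y = y" using collapse_unlooped_id[OF nl] Hp_off_vertex[OF nl] by blast
    moreover have "((u,i), vconn H s g (u,i)) \<in> piece_rel (to_piece P)" using piece_rel_vconn[OF xEp, of "to_piece P"] vconn_piece[OF u] by simp
    ultimately show ?thesis using ffx y by (simp add: r_into_rtrancl)
  next
    assume y: "y = econn {} al g P (u,i)"
    consider "u = al x1" | "u = al x2" | "u \<noteq> al x1" "u \<noteq> al x2" by blast
    then show ?thesis
    proof cases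
      case 1
      then have i': "i < a" using i g_al_x1 by simp
      have y1: "y = (x1, transport al (al x1) a (P e1) i)" using y 1 econn_ax1[OF P i'] by simp
      have "collapse P y = econn {} al g P y" using collapse_unlooped_vertex[OF nl] y1 by simp
      also have "\<dots> = (al x1, i)" using y1 econn_x1[OF P transport_e1_less[OF P i', where al'=al and u="al x1"]] transport_x1_al_x1[OF P i'] by simp
      finally show ?thesis using ffx 1 by simp
    next
      case 2
      then have i': "i < a" using i g_al_x2 by simp
      have y1: "y = (x2, transport al (al x2) a (P e2) i)" using y 2 econn_ax2[OF P i'] by simp
      have "collapse P y = econn {} al g P y" using collapse_unlooped_vertex[OF nl] y1 by simp
      also have "\<dots> = (al x2, i)" using y1 econn_x2[OF P transport_e2_less[OF P i', where al'=al and u="al x2"]] transport_x2_al_x2[OF P i'] by simp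
      finally show ?thesis using ffx 2 by simp
    next
      case 3
      have ye: "y = econn Cp alp g (to_piece P) (u,i)" using y econn_piece_other[OF P nl u 3 i] by simp
      have "fst y = alp u" using ye econn_eq_transport[of u Cp i g "to_piece P" alp] i Cp_unlooped[OF nl]
          perm_assignment_edge_permutes[OF to_piece_in[OF P] u Hp_closed(4)[OF nl u]] by simp
      then have "fst y \<in> Hp" using Hp_closed(1)[OF nl u] by simp
      then have "collapse P y = y" using collapse_unlooped_id[OF nl] Hp_off_vertex[OF nl] by blast
      then show ?thesis using ffx ye piece_rel_econn[OF xEp, of "to_piece P"] by (simp add: r_into_rtrancl)
    qed
  qed
qed

lemma collapse_step_x1:
  assumes P: "P \<in> assigns" and nl: "\<not> looped" and i: "i < a"
    and y: "y = vconn H s g (x1,i) \<or> y = econn {} al g P (x1,i)"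
  shows "(collapse P (x1,i), collapse P y) \<in> (piece_rel (to_piece P))\<^sup>*"
proof -
  let ?t = "transport al x1 a (P e1) i"
  have ffx: "collapse P (x1,i) = (al x1, ?t)" using collapse_unlooped_vertex[OF nl] econn_x1[OF P i] by simp
  have t: "?t < a" using transport_e1_less[OF P i] .
  from y show ?thesis
  proof
    assume y: "y = vconn H s g (x1,i)"
    then have y1: "y = (x2, rev_idx a i)" using vconn_x1[OF i] by simp
    have "collapse P y = (al x2, transport al x2 a (P e2) (rev_idx a i))"
      using collapse_unlooped_vertex[OF nl] y1 econn_x2[OF P rev_idx_less[OF i]] by simp
    moreover have "econn Cp alp g (to_piece P) (al x1, ?t) = (al x2, transport al x2 a (P e2) (rev_idx a i))"
      using econn_piece_al_x1[OF P nl t] fused_path_apply transport_al_x1_x1[OF P i] by simp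
    moreover have "(al x1, ?t) \<in> piece_ends" using al_x1_in_Hp[OF nl] g_al_x1 t by (simp add: strand_ends_def)
    ultimately show ?thesis using ffx piece_rel_econn by (metis r_into_rtrancl)
  next
    assume y: "y = econn {} al g P (x1,i)"
    then have y1: "y = (al x1, ?t)" using econn_x1[OF P i] by simp
    have "collapse P y = y" using collapse_unlooped_id[OF nl] y1 Hp_off_vertex[OF nl al_x1_in_Hp[OF nl]] by simp
    then show ?thesis using ffx y1 by simp
  qed
qed

lemma collapse_step_x2:
  assumes P: "P \<in> assigns" and nl: "\<not> looped" and i: "i < a"
    and y: "y = vconn H s g (x2,i) \<or> y = econn {} al g P (x2,i)"
  shows "(collapse P (x2,i), collapse P y) \<in> (piece_rel (to_piece P))\<^sup>*"
proof -
  let ?t = "transport al x2 a (P e2) i"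
  have ffx: "collapse P (x2,i) = (al x2, ?t)" using collapse_unlooped_vertex[OF nl] econn_x2[OF P i] by simp
  have t: "?t < a" using transport_e2_less[OF P i] .
  from y show ?thesis
  proof
    assume y: "y = vconn H s g (x2,i)"
    then have y1: "y = (x1, rev_idx a i)" using vconn_x2[OF i] by simp
    let ?t1 = "transport al x1 a (P e1) (rev_idx a i)"
    have ffy: "collapse P y = (al x1, ?t1)"
      using collapse_unlooped_vertex[OF nl] y1 econn_x1[OF P rev_idx_less[OF i]] by simp
    have "fused_path P ?t1 = ?t"
      using fused_path_apply transport_al_x1_x1[OF P rev_idx_less[OF i]] by simp
    then have "inv (fused_path P) ?t = ?t1" using permutes_inverses(2)[OF fused_path_permutes[OF P]] by metis
    then have "econn Cp alp g (to_piece P) (al x2, ?t) = (al x1, ?t1)"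
      using econn_piece_al_x2[OF P nl t] by simp
    moreover have "(al x2, ?t) \<in> piece_ends" using al_x2_in_Hp[OF nl] g_al_x2 t by (simp add: strand_ends_def)
    ultimately show ?thesis using ffx ffy piece_rel_econn by (metis r_into_rtrancl)
  next
    assume y: "y = econn {} al g P (x2,i)"
    then have y1: "y = (al x2, ?t)" using econn_x2[OF P i] by simp
    have "collapse P y = y" using collapse_unlooped_id[OF nl] y1 Hp_off_vertex[OF nl al_x2_in_Hp[OF nl]] by simp
    then show ?thesis using ffx y1 by simp
  qed
qed

lemma collapse_step_looped_x1:
  assumes P: "P \<in> assigns" and l: "looped" and i: "i < a"
    and y: "y = vconn H s g (x1,i) \<or> y = econn {} al g P (x1,i)"
  shows "(collapse P (x1,i), collapse P y) \<in> (piece_rel (to_piece P))\<^sup>*"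
proof -
  have ffx: "collapse P (x1,i) = (x1,i)" using collapse_looped_id[OF l] x1_ne_x2 by simp
  from y show ?thesis
  proof
    assume y: "y = vconn H s g (x1,i)"
    then have "collapse P y = (x1, i)" using vconn_x1[OF i] collapse_looped_x2[OF l] by simp
    then show ?thesis using ffx by simp
  next
    assume y: "y = econn {} al g P (x1,i)"
    let ?t = "transport al x1 a (P e1) i"
    have y1: "y = (x2, ?t)" using y econn_x1[OF P i] l looped_iff by simp
    have "collapse P y = (x1, circle_perm P i)" using collapse_looped_x2[OF l] y1 by (simp add: circle_perm_def)
    moreover have "econn Cp alp g (to_piece P) (x1, i) = (x1, circle_perm P i)"
      using econn_piece_looped[OF l] to_piece_looped[OF l] by simp
    moreover have "(x1, i) \<in> piece_ends" using Cp_looped[OF l] i by (simp add: strand_ends_def)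
    ultimately show ?thesis using ffx piece_rel_econn by (metis r_into_rtrancl)
  qed
qed

lemma collapse_step_looped_x2:
  assumes P: "P \<in> assigns" and l: "looped" and i: "i < a"
    and y: "y = vconn H s g (x2,i) \<or> y = econn {} al g P (x2,i)"
  shows "(collapse P (x2,i), collapse P y) \<in> (piece_rel (to_piece P))\<^sup>*"
proof -
  have ffx: "collapse P (x2,i) = (x1, rev_idx a i)" using collapse_looped_x2[OF l] by simp
  from y show ?thesis
  proof
    assume y: "y = vconn H s g (x2,i)"
    then have "y = (x1, rev_idx a i)" using vconn_x2[OF i] by simp
    then have "collapse P y = (x1, rev_idx a i)" using collapse_looped_id[OF l] x1_ne_x2 by simp
    then show ?thesis using ffx by simp
  next
    assume y: "y = econn {} al g P (x2,i)"
    have a1: "al x1 = x2" "al x2 = x1" using l looped_iff looped_iff' by blast+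
    have e21: "e2 = e1" using a1 by auto
    let ?t = "transport al x2 a (P e1) i"
    have y1: "y = (x1, ?t)" using y econn_x2[OF P i] a1 e21 by simp
    have ffy: "collapse P y = (x1, ?t)" using collapse_looped_id[OF l] y1 x1_ne_x2 by simp
    have t: "?t < a" using transport_e1_less[OF P i] .
    have "transport al x1 a (P e1) ?t = i"
      using transport_x1_al_x1[OF P i] a1 by simp
    then have pt: "circle_perm P ?t = rev_idx a i" by (simp add: circle_perm_def)
    have st: "((x1, w), (x1, circle_perm P w)) \<in> piece_rel (to_piece P)" if "w < a" for w
    proof -
      have "(x1, w) \<in> piece_ends" using Cp_looped[OF l] that by (simp add: strand_ends_def)
      then show ?thesis using piece_rel_econn econn_piece_looped[OF l] to_piece_looped[OF l] by metis
    qed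
    have "((x1, circle_perm P ?t), (x1, ?t)) \<in> (piece_rel (to_piece P))\<^sup>*"
      by (rule permutes_orbit_back[OF circle_perm_permutes[OF P] st t])
    then show ?thesis using ffx ffy pt by simp
  qed
qed

lemma rel_side_ends:
  assumes P: "P \<in> assigns" and x: "x \<in> side_ends" and xy: "(x,y) \<in> rel P"
  shows "y \<in> side_ends"
proof -
  obtain u i where ui: "x = (u,i)" "u \<in> S" "u \<in> H" "i < g u" "u \<noteq> h" using side_endsE[OF x] by blast
  have u0: "u \<notin> {h0, al h0}" using bridge_dart_in_S ui by blast
  have "y = vconn H s g (u,i) \<or> y = econn {} al g P (u,i)"
    using xy ui by (auto simp: strand_rel_def)
  then have "fst y \<in> S"
  proof
    assume "y = vconn H s g (u,i)"
    then have "fst y \<in> {s u, s (s u)}" using vconn_involutive(1)[OF ui(3,4)] by simp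
    then show ?thesis using side_s[OF ui(2)] side_s[OF side_s[OF ui(2)]] by auto
  next
    assume "y = econn {} al g P (u,i)"
    then have "fst y = al u" using econn_graph(1)[OF P ui(3,4)] by simp
    then show ?thesis using side_al[OF ui(2)] u0 by auto
  qed
  then show ?thesis using rel_sym[OF P xy] by blast
qed

lemma side_ends_closed:
  assumes P: "P \<in> assigns" and x: "x \<in> side_ends" and xy: "(x,y) \<in> (rel P)\<^sup>*"
  shows "y \<in> side_ends"
  using xy
proof (induction rule: rtrancl_induct)
  case (step y z)
  then show ?case using rel_side_ends[OF P] by blast
qed (rule x)

lemma collapse_step:
  assumes P: "P \<in> assigns" and x: "x \<in> side_ends" and xy: "(x,y) \<in> rel P"
  shows "(collapse P x, collapse P y) \<in> (piece_rel (to_piece P))\<^sup>*"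
proof -
  obtain u i where ui: "x = (u,i)" "u \<in> S" "u \<in> H" "i < g u" "u \<noteq> h" using side_endsE[OF x] by blast
  have y: "y = vconn H s g (u,i) \<or> y = econn {} al g P (u,i)"
    using xy ui by (auto simp: strand_rel_def)
  show ?thesis
  proof (cases looped)
    case True
    then consider "u = x1" | "u = x2" using ui looped_S by auto
    then show ?thesis
    proof cases
      case 1 then show ?thesis using collapse_step_looped_x1[OF P True _ y[unfolded 1]] ui by simp
    next
      case 2 then show ?thesis using collapse_step_looped_x2[OF P True _ y[unfolded 2]] ui g_x2 by simp
    qed
  next
    case False
    consider "u = x1" | "u = x2" | "u \<in> Hp" using ui Hp_unlooped[OF False] by auto
    then show ?thesis
    proof cases
      case 1 then show ?thesis using collapse_step_x1[OF P False _ y[unfolded 1]] ui by simp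
    next
      case 2 then show ?thesis using collapse_step_x2[OF P False _ y[unfolded 2]] ui g_x2 by simp
    next
      case 3 then show ?thesis using collapse_step_Hp[OF P False _ ui(4) y] ui by simp
    qed
  qed
qed

lemma collapse_rtrancl:
  assumes P: "P \<in> assigns" and x: "x \<in> side_ends" and xy: "(x,y) \<in> (rel P)\<^sup>*"
  shows "(collapse P x, collapse P y) \<in> (piece_rel (to_piece P))\<^sup>*"
  using xy
proof (induction rule: rtrancl_induct)
  case (step y z)
  then show ?case
    using collapse_step[OF P side_ends_closed[OF P x step.hyps(1)] step.hyps(2)] by (meson rtrancl_trans)
qed simp

lemma collapse_curves_iff:
  assumes P: "P \<in> assigns" and x: "x \<in> side_ends" and y: "y \<in> side_ends"
  shows "(x,y) \<in> (rel P)\<^sup>* \<longleftrightarrow> (collapse P x, collapse P y) \<in> (piece_rel (to_piece P))\<^sup>*"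
proof
  assume "(x,y) \<in> (rel P)\<^sup>*"
  then show "(collapse P x, collapse P y) \<in> (piece_rel (to_piece P))\<^sup>*" by (rule collapse_rtrancl[OF P x])
next
  assume a: "(collapse P x, collapse P y) \<in> (piece_rel (to_piece P))\<^sup>*"
  have "piece_rel (to_piece P) \<subseteq> (rel P)\<^sup>*" using piece_rel_in_rel[OF P] by auto
  then have "(piece_rel (to_piece P))\<^sup>* \<subseteq> (rel P)\<^sup>*" by (rule rtrancl_subset_rtrancl)
  then have "(collapse P x, collapse P y) \<in> (rel P)\<^sup>*" using a by blast
  moreover have "(x, collapse P x) \<in> (rel P)\<^sup>*" "(collapse P y, y) \<in> (rel P)\<^sup>*" using collapse_connected[OF P x] collapse_connected[OF P y] by blast+
  ultimately show "(x,y) \<in> (rel P)\<^sup>*" by (meson rtrancl_trans)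
qed

lemma finite_side_ends: "finite side_ends" using finite_ends by simp

lemma card_side_curves:
  assumes P: "P \<in> assigns"
  shows "card (side_ends // (rel P)\<^sup>*) = ncurves Hp s alp Cp g (to_piece P)"
  unfolding ncurves_def
  by (rule card_quotient_rtrancl_map[OF finite_side_ends collapse_image[OF P] collapse_curves_iff[OF P]])

lemma vertex_of_h: assumes "u \<in> {h, x1, x2}" shows "{u, s u, s (s u)} = {h, x1, x2}"
proof -
  have a1: "s x2 = h" by (rule s_x2)
  have a2: "s (s x2) = x1" using s_x2 by simp
  consider "u = h" | "u = x1" | "u = x2" using assms by blast
  then show ?thesis
  proof cases
    case 1 then show ?thesis by simp
  next
    case 2
    have "{x1, s x1, s (s x1)} = {x1, x2, h}" using a1 by simp
    then show ?thesis using 2 by blast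
  next
    case 3
    have "{x2, s x2, s (s x2)} = {x2, h, x1}" using a1 a2 by simp
    then show ?thesis using 3 by blast
  qed
qed

lemma verts_side:
  shows "(\<lambda>u. {u, s u, s (s u)}) ` S = insert {h, x1, x2} (verts Hp s)"
    and "{h, x1, x2} \<notin> verts Hp s"
proof -
  show "(\<lambda>u. {u, s u, s (s u)}) ` S = insert {h, x1, x2} (verts Hp s)"
  proof
    show "(\<lambda>u. {u, s u, s (s u)}) ` S \<subseteq> insert {h, x1, x2} (verts Hp s)"
    proof
      fix v assume "v \<in> (\<lambda>u. {u, s u, s (s u)}) ` S"
      then obtain u where u: "u \<in> S" "v = {u, s u, s (s u)}" unfolding image_iff by (elim bexE) simp
      show "v \<in> insert {h, x1, x2} (verts Hp s)"
      proof (cases "u \<in> {h, x1, x2}")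
        case True then have "v = {h, x1, x2}" using vertex_of_h[OF True] u(2) by simp
        then show ?thesis by simp
      next
        case False
        have "\<not> looped"
        proof
          assume "looped" then have "S = {h, x1, x2}" by (rule looped_S)
          then show False using u(1) False by simp
        qed
        then have "u \<in> Hp" using Hp_unlooped False u(1) by simp
        then have "v \<in> verts Hp s" using u(2) unfolding verts_def by (rule rev_image_eqI)
        then show ?thesis by simp
      qed
    qed
  next
    show "insert {h, x1, x2} (verts Hp s) \<subseteq> (\<lambda>u. {u, s u, s (s u)}) ` S"
    proof -
      have "{h, x1, x2} \<in> (\<lambda>u. {u, s u, s (s u)}) ` S" using h_in_S by (rule rev_image_eqI) simp
      moreover have "verts Hp s \<subseteq> (\<lambda>u. {u, s u, s (s u)}) ` S" unfolding verts_def using Hp_subset_S by (rule image_mono)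
      ultimately show ?thesis by blast
    qed
  qed
  show "{h, x1, x2} \<notin> verts Hp s"
  proof
    assume "{h, x1, x2} \<in> verts Hp s"
    then obtain u where u: "u \<in> Hp" "{h, x1, x2} = {u, s u, s (s u)}" by (auto simp: verts_def)
    have nl: "\<not> looped" using u Hp_looped by auto
    have "s u \<in> Hp" "s (s u) \<in> Hp" using Hp_closed(5)[OF nl] u by blast+
    have "h \<in> {u, s u, s (s u)}" using u(2) by (metis insertI1)
    then have "h \<in> Hp" using u(1) \<open>s u \<in> Hp\<close> \<open>s (s u) \<in> Hp\<close> by blast
    then show False using Hp_unlooped[OF nl] by auto
  qed
qed

lemma vfactor_bridge_vertex: "vfactor s g {h, x1, x2} = fact (a + 1) * fact a"
proof -
  have e: "erep {h, x1, x2} \<in> {h, x1, x2}" unfolding erep_def by (rule someI[of _ h]) simp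
  have n1: "(0 + a + a) div 2 + 1 = a + 1" "(a + a + 0) div 2 + 1 = a + 1" "(a + 0 + a) div 2 + 1 = a + 1"
    by simp_all
  have n2: "(0 + a - a) div 2 = 0" "(a + 0 - a) div 2 = 0" "(a + a - 0) div 2 = a"
    by simp_all
  have g3: "g (s x2) = 0" "g (s (s x2)) = a" using g_h s_x2 by simp_all
  consider "erep {h, x1, x2} = h" | "erep {h, x1, x2} = x1" | "erep {h, x1, x2} = x2" using e by blast
  then show ?thesis
  proof cases
    case 1
    have "vfactor s g {h, x1, x2} = fact ((g h + a + g x2) div 2 + 1) * fact ((g h + a - g x2) div 2) *
        fact ((g h + g x2 - a) div 2) * fact ((a + g x2 - g h) div 2)"
      unfolding vfactor_def Let_def 1 by (rule refl)
    then show ?thesis unfolding g_h g_x2 n1 n2 by simp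
  next
    case 2
    have "vfactor s g {h, x1, x2} = fact ((a + g x2 + g (s x2)) div 2 + 1) * fact ((a + g x2 - g (s x2)) div 2) *
        fact ((a + g (s x2) - g x2) div 2) * fact ((g x2 + g (s x2) - a) div 2)"
      unfolding vfactor_def Let_def 2 by (rule refl)
    then show ?thesis unfolding g3 g_x2 n1 n2 by simp
  next
    case 3
    have "vfactor s g {h, x1, x2} = fact ((g x2 + g (s x2) + g (s (s x2))) div 2 + 1) * fact ((g x2 + g (s x2) - g (s (s x2))) div 2) *
        fact ((g x2 + g (s (s x2)) - g (s x2)) div 2) * fact ((g (s x2) + g (s (s x2)) - g x2) div 2)"
      unfolding vfactor_def Let_def 3 by (rule refl)
    then show ?thesis unfolding g3 g_x2 n1 n2 by simp
  qed
qed

lemma card_forgotten_perms: "card forgotten_perms = (if looped then 1 else fact a)"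
  using card_permutations[of "{..<a}" a] by (simp add: forgotten_perms_def)

lemma finite_forgotten_perms: "finite forgotten_perms" by (simp add: forgotten_perms_def finite_permutations)

lemma sqrt_vfactor_bridge_vertex: "sqrt (vfactor s g {h, x1, x2}) = fact a * sqrt (real a + 1)"
proof -
  have "vfactor s g {h, x1, x2} = (real a + 1) * (fact a * fact a)"
    unfolding vfactor_bridge_vertex by (simp add: algebra_simps)
  then have "sqrt (vfactor s g {h, x1, x2}) = sqrt (real a + 1) * sqrt (fact a * fact a)"
    by (simp add: real_sqrt_mult)
  then show ?thesis by simp
qed

lemma delta_eq: "real (card forgotten_perms) * vweight s g {h, x1, x2} = delta s al g h"
  by (cases looped) (simp_all add: vweight_def sqrt_vfactor_bridge_vertex card_forgotten_perms delta_def Let_def)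

lemma prod_vweight_side:
  "(\<Prod>v\<in>(\<lambda>u. {u, s u, s (s u)}) ` S. vweight s g v) = vweight s g {h, x1, x2} * (\<Prod>v\<in>verts Hp s. vweight s g v)"
  unfolding verts_side(1) using verts_side(2) finite_Hp by (simp add: verts_def)

lemma finite_piece_assigns: "finite piece_assigns"
proof -
  have "finite (edges Hp alp Cp)"
  proof (cases looped)
    case True then show ?thesis using edges_piece_looped by simp
  next
    case False then show ?thesis using edges_piece_unlooped finite_side_edges_rest by simp
  qed
  then show ?thesis unfolding perm_assignments_def by (intro finite_PiE) (simp_all add: finite_permutations)
qed

end

section \<open>Factorisation of the evaluation\<close>

context bridge begin

interpretation end0: bridge_end H s al g h0 h0
  by unfold_locales simp

interpretation end1: bridge_end H s al g h0 "al h0"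
  by unfold_locales simp

lemma edges_split:
  "edges H al {} = end0.side_edges \<union> end1.side_edges \<union> {{h0, al h0}}"
proof
  show "edges H al {} \<subseteq> end0.side_edges \<union> end1.side_edges \<union> {{h0, al h0}}"
  proof
    fix e assume e: "e \<in> edges H al {}"
    then obtain u where u: "u \<in> H" "e = {u, al u}" by (auto simp: edges_def)
    show "e \<in> end0.side_edges \<union> end1.side_edges \<union> {{h0, al h0}}"
    proof (cases "u = h0 \<or> u = al h0")
      case True
      then show ?thesis using u al_al[OF h0_in_H] by auto
    next
      case False
      then have "e \<subseteq> end0.S \<or> e \<subseteq> end1.S" using u H_eq_sides side_al by auto
      then show ?thesis using e by auto
    qed
  qed
qed (use doubleton_in_edges[OF h0_in_H] in auto)

lemma prod_edges_split:
  "(\<Prod>e\<in>edges H al {}. f e) = (\<Prod>e\<in>end0.side_edges. f e) * (\<Prod>e\<in>end1.side_edges. f e) * f {h0, al h0}"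
proof -
  have "end0.side_edges \<inter> end1.side_edges = {}"
    using sides_disjoint by (auto simp: edges_def)
  moreover have "{h0, al h0} \<notin> end0.side_edges \<union> end1.side_edges"
    using end0.al_h_notin_S end1.al_h_notin_S al_al[OF h0_in_H] by auto
  moreover have "prod f (edges H al {}) = prod f (end0.side_edges \<union> end1.side_edges \<union> {{h0, al h0}})"
    by (rule arg_cong[OF edges_split])
  ultimately show ?thesis
    using end0.finite_side_edges end1.finite_side_edges by (simp add: prod.union_disjoint ac_simps)
qed

lemma assignment_bridge_id: "P \<in> assigns \<Longrightarrow> P {h0, al h0} = id"
  using assignment_on_edge[of P "{}" h0] h0_in_H g0 by simp

lemma ncurves_split:
  assumes P: "P \<in> assigns"
  shows "ncurves H s al {} g P = ncurves end0.Hp s end0.alp end0.Cp g (end0.to_piece P)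
    + ncurves end1.Hp s end1.alp end1.Cp g (end1.to_piece P)"
proof -
  have "ends = end0.side_ends \<union> end1.side_ends" "end0.side_ends \<inter> end1.side_ends = {}"
    using H_eq_sides sides_disjoint by (auto simp: strand_ends_def)
  then have "ncurves H s al {} g P = card (end0.side_ends // (rel P)\<^sup>*) + card (end1.side_ends // (rel P)\<^sup>*)"
    unfolding ncurves_def
    by (rule card_quotient_Un_closed[OF finite_ends])
       (use end0.side_ends_closed[OF P] in blast)
  then show ?thesis using end0.card_side_curves[OF P] end1.card_side_curves[OF P] by simp
qed

lemma penrose_term_split:
  assumes P: "P \<in> assigns"
  shows "penrose_term H s al {} g P = penrose_term end0.Hp s end0.alp end0.Cp g (end0.to_piece P)
    * penrose_term end1.Hp s end1.alp end1.Cp g (end1.to_piece P)"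
  unfolding penrose_term_def ncurves_split[OF P] prod_edges_split
    end0.prod_sign_to_piece[OF P] end1.prod_sign_to_piece[OF P]
  by (simp add: assignment_bridge_id[OF P] power_add algebra_simps)

lemma finite_edges: "finite (edges H al {})"
  using finite_H by (simp add: edges_def)

lemma bij_betw_split_assignment:
  "bij_betw (\<lambda>P. (end0.to_piece P, end1.to_piece P, end0.forgotten P, end1.forgotten P)) assigns
    (end0.piece_assigns \<times> end1.piece_assigns \<times> end0.forgotten_perms \<times> end1.forgotten_perms)"
  (is "bij_betw ?split _ ?prod")
proof -
  have inj: "inj_on ?split assigns"
  proof (rule inj_onI)
    fix P Q assume P: "P \<in> assigns" and Q: "Q \<in> assigns" and eq: "?split P = ?split Q"
    show "P = Q"
    proof (rule PiE_ext)
      show "P \<in> Pi\<^sub>E (edges H al {}) (\<lambda>e. {\<pi>. \<pi> permutes {..<g (erep e)}})"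
        "Q \<in> Pi\<^sub>E (edges H al {}) (\<lambda>e. {\<pi>. \<pi> permutes {..<g (erep e)}})"
        using P Q by (simp_all add: perm_assignments_def)
      fix e assume "e \<in> edges H al {}"
      then consider "e \<in> end0.side_edges" | "e \<in> end1.side_edges" | "e = {h0, al h0}"
        using edges_split by blast
      then show "P e = Q e"
        using end0.to_piece_inj[OF P Q] end1.to_piece_inj[OF P Q] eq
          assignment_bridge_id[OF P] assignment_bridge_id[OF Q]
        by cases auto
    qed
  qed
  have "card assigns = card ?prod"
  proof -
    have "g (erep {h0, al h0}) = 0"
      using erep_doubleton[of h0 "al h0"] g0 g_al[OF h0_in_H] by auto
    then have "card assigns = (card end0.piece_assigns * card end0.forgotten_perms)
        * (card end1.piece_assigns * card end1.forgotten_perms)"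
      unfolding card_perm_assignments[OF finite_edges] prod_edges_split
      by (simp add: end0.prod_fact_side_edges end1.prod_fact_side_edges)
    then show ?thesis by (simp add: card_cartesian_product)
  qed
  moreover have "?split ` assigns \<subseteq> ?prod"
    using end0.to_piece_in end1.to_piece_in end0.forgotten_in end1.forgotten_in by auto
  moreover have "finite ?prod"
    using end0.finite_piece_assigns end1.finite_piece_assigns
      end0.finite_forgotten_perms end1.finite_forgotten_perms by simp
  ultimately show ?thesis
    using inj card_image[OF inj] by (simp add: bij_betw_def card_subset_eq)
qed

lemma penrose_split:
  "penrose H s al {} g = penrose end0.Hp s end0.alp end0.Cp g * penrose end1.Hp s end1.alp end1.Cp g
    * card end0.forgotten_perms * card end1.forgotten_perms"
proof -
  let ?t0 = "penrose_term end0.Hp s end0.alp end0.Cp g" and ?t1 = "penrose_term end1.Hp s end1.alp end1.Cp g"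
  have "penrose H s al {} g = (\<Sum>P\<in>assigns. ?t0 (end0.to_piece P) * ?t1 (end1.to_piece P))"
    unfolding penrose_eq_sum by (rule sum.cong) (simp_all add: penrose_term_split)
  also have "\<dots> = (\<Sum>(Q0, Q1, _, _) \<in> end0.piece_assigns \<times> end1.piece_assigns
      \<times> end0.forgotten_perms \<times> end1.forgotten_perms. ?t0 Q0 * ?t1 Q1)"
    using sum.reindex_bij_betw[OF bij_betw_split_assignment, of "\<lambda>(Q0, Q1, _, _). ?t0 Q0 * ?t1 Q1"]
    by simp
  finally show ?thesis
    by (simp add: penrose_eq_sum sum_cartesian_product4)
qed

lemma prod_vweight_split:
  "(\<Prod>v\<in>verts H s. vweight s g v) =
     vweight s g {h0, s h0, s (s h0)} * (\<Prod>v\<in>verts end0.Hp s. vweight s g v)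
   * vweight s g {al h0, s (al h0), s (s (al h0))} * (\<Prod>v\<in>verts end1.Hp s. vweight s g v)"
proof -
  let ?V = "\<lambda>u. {u, s u, s (s u)}"
  have "?V ` end0.S \<inter> ?V ` end1.S = {}"
  proof -
    have "?V u \<subseteq> side H s al h0 h" if "u \<in> side H s al h0 h" for u h
      using that side_s by auto
    then show ?thesis using sides_disjoint by blast
  qed
  moreover have "verts H s = ?V ` end0.S \<union> ?V ` end1.S"
    unfolding verts_def using H_eq_sides by blast
  moreover have "finite (?V ` end0.S)" "finite (?V ` end1.S)"
    using end0.finite_S end1.finite_S by auto
  ultimately show ?thesis
    using end0.prod_vweight_side end1.prod_vweight_side by (simp add: prod.union_disjoint)
qed

lemma unitary_split:
  "unitary H s al {} g =
      unitary (piece_darts H s al h0 h0) s (piece_al s al h0) (piece_circles s al h0) g *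
      unitary (piece_darts H s al h0 (al h0)) s (piece_al s al (al h0)) (piece_circles s al (al h0)) g *
      delta s al g h0 * delta s al g (al h0)"
  unfolding unitary_eq_vweight penrose_split prod_vweight_split
    end0.delta_eq[symmetric] end1.delta_eq[symmetric]
  by (simp add: algebra_simps)

end

theorem proposition5:
  fixes H :: "'d set" and s al :: "'d \<Rightarrow> 'd" and g :: "'d \<Rightarrow> nat" and h0 :: 'd
  assumes "cubic_ribbon H s al"
    and "admissible H s al g"
    and "H \<noteq> {}"
    and "ribbon_connected H s al"
    and "is_bridge H s al h0"
    and "g h0 = 0"
    and "al h0 \<notin> {h0, s h0, s (s h0)}"
  shows "unitary H s al {} g =
      unitary (piece_darts H s al h0 h0) s (piece_al s al h0) (piece_circles s al h0) g *
      unitary (piece_darts H s al h0 (al h0)) s (piece_al s al (al h0)) (piece_circles s al (al h0)) g *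
      delta s al g h0 * delta s al g (al h0)"
proof -
  (* H \<noteq> {} is implied by h0 \<in> H. *)
  interpret bridge H s al g h0
    using assms(1,2,4,5,6,7) by unfold_locales
  show ?thesis by (rule unitary_split)
qed

end
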